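(* A family $\{\Theta_n\}_{n\ge0}$ of lattice congruences ($\Theta_n$ on the weak order $S_n$) is insertional if and only if for every $n$ and every join-irreducible $\gamma\in S_n$ contracted by $\Theta_n$, with associated subset $A$, $m=\min A$ and $M=\max([n]\setminus A)$, the following hold: (i) $\Theta_{n+1}$ contracts the right insertion $\mathrm{R}_i(\gamma)$ for every $i\in[m+1,M+1]$; (ii) $\Theta_{n+1}$ contracts the left insertion $\mathrm{L}_i(\gamma)$ for every $i\in[m,M]$.
   Context: $S_n$: permutations of $[n]$ in one-line notation with the right weak order (inclusion of sets of inverted value pairs), a lattice. A join-irreducible $\gamma\in S_n$ is a permutation with exactly one descent $\gamma_i>\gamma_{i+1}$; its associated subset is $A=\{\gamma_{i+1},\dots,\gamma_n\}$, and $\gamma$ consists of the elements of $[n]\setminus A$ in increasing order followed by those of $A$ in increasing order (this gives a bijection between join-irreducibles and nonempty $A\subseteq[n]$ with $\max([n]\setminus A)>\min A$). $\gamma_*$ is the unique element covered by $\gamma$; a congruence contracts $\gamma$ if $\gamma\equiv\gamma_*$. For $i\in[n+1]$, $\mathrm{L}_i(\gamma)$ is the join-irreducible of $S_{n+1}$ with associated subset $(A\cap[1,i-1])\cup\{j+1:j\in A\cap[i,n]\}$, and $\mathrm{R}_i(\gamma)$ the one with associated subset $(A\cap[1,i-1])\cup\{i\}\cup\{j+1:j\in A\cap[i,n]\}$. $\mathrm{st}(a_1..a_k)$ is the $u\in S_k$ with $u_i<u_j\iff a_i<a_j$. The family is insertional if for all $p,q\ge0$ and every $p$-subset $Q\subseteq[p+q]$,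 letting $\varphi_Q(u,v)$ be the unique $x\in S_{p+q}$ with $\{x_1..x_p\}=Q$, $\mathrm{st}(x_1..x_p)=u$, $\mathrm{st}(x_{p+1}..x_{p+q})=v$: whenever $u\equiv u'$ mod $\Theta_p$ and $v\equiv v'$ mod $\Theta_q$, $\varphi_Q(u,v)\equiv\varphi_Q(u',v')$ mod $\Theta_{p+q}$. *)

theory Defs
  imports Main
begin

definition perms :: "nat \<Rightarrow> nat list set" where
  "perms n = {xs. distinct xs \<and> set xs = {1..n}}"

definition inversions :: "nat list \<Rightarrow> (nat \<times> nat) set" where
  "inversions xs = {(a, b). a < b \<and> (\<exists>i j. i < j \<and> j < length xs \<and> xs ! i = b \<and> xs ! j = a)}"

definition weak_le :: "nat list \<Rightarrow> nat list \<Rightarrow> bool" where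
  "weak_le x y \<longleftrightarrow> inversions x \<subseteq> inversions y"

definition weak_join :: "nat \<Rightarrow> nat list \<Rightarrow> nat list \<Rightarrow> nat list" where
  "weak_join n x y = (THE z. z \<in> perms n \<and> weak_le x z \<and> weak_le y z \<and>
      (\<forall>w\<in>perms n. weak_le x w \<and> weak_le y w \<longrightarrow> weak_le z w))"

definition weak_meet :: "nat \<Rightarrow> nat list \<Rightarrow> nat list \<Rightarrow> nat list" where
  "weak_meet n x y = (THE z. z \<in> perms n \<and> weak_le z x \<and> weak_le z y \<and>
      (\<forall>w\<in>perms n. weak_le w x \<and> weak_le w y \<longrightarrow> weak_le w z))"

definition lattice_congruence :: "nat \<Rightarrow> (nat list \<times> nat list) set \<Rightarrow> bool" where
  "lattice_congruence n \<Theta> \<longleftrightarrow> equiv (perms n) \<Theta> \<and>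
     (\<forall>x x' y y'. (x, x') \<in> \<Theta> \<longrightarrow> (y, y') \<in> \<Theta> \<longrightarrow>
        (weak_join n x y, weak_join n x' y') \<in> \<Theta> \<and>
        (weak_meet n x y, weak_meet n x' y') \<in> \<Theta>)"

definition weak_covers :: "nat \<Rightarrow> nat list \<Rightarrow> nat list \<Rightarrow> bool" where
  "weak_covers n y x \<longleftrightarrow> x \<in> perms n \<and> y \<in> perms n \<and> weak_le x y \<and> x \<noteq> y \<and>
     \<not> (\<exists>z\<in>perms n. weak_le x z \<and> weak_le z y \<and> z \<noteq> x \<and> z \<noteq> y)"

(* Descent positions (0-based): i with xs!i > xs!(i+1) *)
definition descents :: "nat list \<Rightarrow> nat set" where
  "descents xs = {i. Suc i < length xs \<and> xs ! i > xs ! Suc i}"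

definition join_irreducible :: "nat \<Rightarrow> nat list \<Rightarrow> bool" where
  "join_irreducible n g \<longleftrightarrow> g \<in> perms n \<and> card (descents g) = 1"

(* Associated subset {g_{i+1},...,g_n} where g_i > g_{i+1} is the descent *)
definition assoc_subset :: "nat list \<Rightarrow> nat set" where
  "assoc_subset g = set (drop (Suc (the_elem (descents g))) g)"

definition lower_cover :: "nat \<Rightarrow> nat list \<Rightarrow> nat list" where
  "lower_cover n g = (THE x. weak_covers n g x)"

definition contracts :: "nat \<Rightarrow> (nat list \<times> nat list) set \<Rightarrow> nat list \<Rightarrow> bool" where
  "contracts n \<Theta> g \<longleftrightarrow> (g, lower_cover n g) \<in> \<Theta>"

(* The join-irreducible of S_m with associated subset B *)
definition jirr_of :: "nat \<Rightarrow> nat set \<Rightarrow> nat list" where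
  "jirr_of m B = sorted_list_of_set ({1..m} - B) @ sorted_list_of_set B"

definition L_ins :: "nat \<Rightarrow> nat \<Rightarrow> nat list \<Rightarrow> nat list" where
  "L_ins n i g = (let A = assoc_subset g in
     jirr_of (Suc n) ((A \<inter> {1..i-1}) \<union> {Suc j | j. j \<in> A \<inter> {i..n}}))"

definition R_ins :: "nat \<Rightarrow> nat \<Rightarrow> nat list \<Rightarrow> nat list" where
  "R_ins n i g = (let A = assoc_subset g in
     jirr_of (Suc n) ((A \<inter> {1..i-1}) \<union> {i} \<union> {Suc j | j. j \<in> A \<inter> {i..n}}))"

definition st :: "nat list \<Rightarrow> nat list" where
  "st xs = map (\<lambda>a. card {b \<in> set xs. b \<le> a}) xs"

definition phi :: "nat \<Rightarrow> nat \<Rightarrow> nat set \<Rightarrow> nat list \<Rightarrow> nat list \<Rightarrow> nat list" where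
  "phi p q Q u v = (THE x. x \<in> perms (p + q) \<and> set (take p x) = Q \<and>
      st (take p x) = u \<and> st (drop p x) = v)"

definition insertional :: "(nat \<Rightarrow> (nat list \<times> nat list) set) \<Rightarrow> bool" where
  "insertional \<Theta> \<longleftrightarrow> (\<forall>p q Q u u' v v'. Q \<subseteq> {1..p+q} \<and> card Q = p \<and>
      (u, u') \<in> \<Theta> p \<and> (v, v') \<in> \<Theta> q \<longrightarrow>
      (phi p q Q u v, phi p q Q u' v') \<in> \<Theta> (p + q))"

end

theory Submission
  imports Defs
begin

(*
  A congruence of the weak order is determined by the covers it contracts, and the cover of y
  that swaps the entries b > a of a descent is contracted iff its label is contracted: the
  join-irreducible with associated subset {a} \<union> {c. c > b} \<union> {c \<in> (a, b). c is right of a in y}.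
  The shuffle \<phi>\<^sub>Q maps covers to covers, and the label of an image cover arises from the
  original label by inserting the new values one at a time.  Each such insertion is some R\<^sub>i or
  L\<^sub>i with i in the range of (i) resp. (ii), or outside it, where it coincides with R\<^sub>M\<^sub>+\<^sub>1
  resp. L\<^sub>m.  Hence (i) and (ii) make \<phi>\<^sub>Q compatible with the congruences in each argument,
  walking from u and u' up to u \<or> u' one cover at a time.  Conversely, (i) and (ii) are the
  labels of the images of the cover \<gamma>\<^sub>* \<lessdot> \<gamma> under \<phi>\<^sub>Q(-, 1) and \<phi>\<^sub>Q(1, -).
*)

section \<open>Lists and the relative order of their entries\<close>

lemma in_set_drop_iff: "c \<in> set (drop k xs) \<longleftrightarrow> (\<exists>j. k \<le> j \<and> j < length xs \<and> xs ! j = c)"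
  by (auto simp: in_set_conv_nth)
    (metis le_add1 add.commute less_diff_conv, metis add_diff_inverse_nat diff_less_mono not_less)

lemma Max_set_sorted: "sorted xs \<Longrightarrow> xs \<noteq> [] \<Longrightarrow> Max (set xs) = last xs"
  by (induction xs rule: rev_induct) (auto simp: sorted_append intro: Max_eqI)

definition precedes :: "'a list \<Rightarrow> 'a \<Rightarrow> 'a \<Rightarrow> bool" where
  "precedes xs c d \<longleftrightarrow> (\<exists>i j. i < j \<and> j < length xs \<and> xs ! i = c \<and> xs ! j = d)"

lemma inversions_precedes: "inversions xs = {(a, b). a < b \<and> precedes xs b a}"
  unfolding inversions_def precedes_def by auto

lemma precedesD: "precedes xs c d \<Longrightarrow> c \<in> set xs \<and> d \<in> set xs"
  unfolding precedes_def by auto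

lemma precedes_irrefl: "distinct xs \<Longrightarrow> \<not> precedes xs c c"
  unfolding precedes_def by (auto simp: nth_eq_iff_index_eq)

lemma precedes_asym: "distinct xs \<Longrightarrow> precedes xs c d \<Longrightarrow> \<not> precedes xs d c"
  unfolding precedes_def by (metis dual_order.strict_trans nat_neq_iff nth_eq_iff_index_eq)

lemma precedes_trans: "distinct xs \<Longrightarrow> precedes xs c d \<Longrightarrow> precedes xs d e \<Longrightarrow> precedes xs c e"
  unfolding precedes_def by (metis dual_order.strict_trans nth_eq_iff_index_eq)

lemma precedes_total:
  "c \<in> set xs \<Longrightarrow> d \<in> set xs \<Longrightarrow> c \<noteq> d \<Longrightarrow> precedes xs c d \<or> precedes xs d c"
  unfolding precedes_def in_set_conv_nth by (metis nat_neq_iff)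

lemma precedes_Nil [simp]: "\<not> precedes [] c d"
  unfolding precedes_def by simp

lemma precedes_Cons: "precedes (x # xs) c d \<longleftrightarrow> (c = x \<and> d \<in> set xs) \<or> precedes xs c d"
proof
  assume "precedes (x # xs) c d"
  then obtain i j where "i < j" "j < Suc (length xs)" "(x # xs) ! i = c" "(x # xs) ! j = d"
    unfolding precedes_def by auto
  then show "(c = x \<and> d \<in> set xs) \<or> precedes xs c d"
    unfolding precedes_def by (cases i; cases j) auto
next
  assume "(c = x \<and> d \<in> set xs) \<or> precedes xs c d"
  then show "precedes (x # xs) c d"
  proof
    assume "c = x \<and> d \<in> set xs"
    then obtain j where "j < length xs" "xs ! j = d" "c = x" by (auto simp: in_set_conv_nth)
    then show ?thesis unfolding precedes_def by (intro exI[of _ 0] exI[of _ "Suc j"]) auto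
  next
    assume "precedes xs c d"
    then obtain i j where "i < j" "j < length xs" "xs ! i = c" "xs ! j = d"
      unfolding precedes_def by blast
    then show ?thesis unfolding precedes_def by (intro exI[of _ "Suc i"] exI[of _ "Suc j"]) auto
  qed
qed

lemma precedes_append:
  "precedes (xs @ ys) c d \<longleftrightarrow> precedes xs c d \<or> precedes ys c d \<or> (c \<in> set xs \<and> d \<in> set ys)"
  by (induction xs) (auto simp: precedes_Cons)

lemma precedes_rev: "precedes (rev xs) c d \<longleftrightarrow> precedes xs d c"
  by (induction xs) (auto simp: precedes_Cons precedes_append)

lemma precedes_map: "precedes (map f xs) c d \<longleftrightarrow> (\<exists>c' d'. c = f c' \<and> d = f d' \<and> precedes xs c' d')"
  by (induction xs) (auto simp: precedes_Cons)

lemma precedes_map_inj: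
  "inj_on f (set xs) \<Longrightarrow> c \<in> set xs \<Longrightarrow> d \<in> set xs \<Longrightarrow>
   precedes (map f xs) (f c) (f d) \<longleftrightarrow> precedes xs c d"
  unfolding precedes_map by (metis precedesD inj_on_def)

lemma precedes_sorted:
  "sorted xs \<Longrightarrow> distinct xs \<Longrightarrow> precedes xs c d \<longleftrightarrow> c \<in> set xs \<and> d \<in> set xs \<and> c < d"
  by (induction xs) (auto simp: precedes_Cons, metis le_neq_trans)

lemma list_eq_if_precedes_eq:
  assumes "distinct xs" "distinct ys" "set xs = set ys" "\<And>c d. precedes xs c d \<longleftrightarrow> precedes ys c d"
  shows "xs = ys"
  using assms
proof (induction xs arbitrary: ys)
  case (Cons x xs)
  then obtain y ys' where ys: "ys = y # ys'" by (cases ys) auto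
  have "x = y"
  proof (rule ccontr)
    assume "x \<noteq> y"
    then have "precedes (x # xs) x y" using Cons.prems(3) ys by (auto simp: precedes_Cons)
    then show False using Cons.prems(2,4) ys \<open>x \<noteq> y\<close> by (auto simp: precedes_Cons dest: precedesD)
  qed
  moreover have "xs = ys'"
  proof (rule Cons.IH)
    show "distinct xs" "distinct ys'" using Cons.prems(1,2) ys by auto
    show "set xs = set ys'" using Cons.prems(1-3) ys \<open>x = y\<close> by auto
    show "precedes xs c d \<longleftrightarrow> precedes ys' c d" for c d
      using Cons.prems(1,2) Cons.prems(4)[of c d] ys \<open>x = y\<close>
      by (auto simp: precedes_Cons dest: precedesD)
  qed
  ultimately show ?case using ys by simp
qed simp

lemma precedes_if_adjacent_precede:
  assumes "distinct xs" "set ys \<subseteq> set xs" "\<And>i. Suc i < length ys \<Longrightarrow> precedes xs (ys ! i) (ys ! Suc i)"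
    and "precedes ys c d"
  shows "precedes xs c d"
  using assms(2-)
proof (induction ys arbitrary: c d)
  case (Cons a ys)
  have IH: "precedes ys c' d' \<Longrightarrow> precedes xs c' d'" for c' d'
    using Cons.IH Cons.prems(1,2) by (metis Suc_less_eq length_Cons nth_Cons_Suc set_subset_Cons subset_trans)
  from Cons.prems(3) consider "c = a" "d \<in> set ys" | "precedes ys c d" by (auto simp: precedes_Cons)
  then show ?case
  proof cases
    case 1
    then obtain b ys' where ys: "ys = b # ys'" by (cases ys) auto
    have "precedes xs a b" using Cons.prems(2)[of 0] ys by simp
    moreover from 1 ys have "d = b \<or> precedes ys b d" by (auto simp: precedes_Cons)
    ultimately show ?thesis using IH 1 precedes_trans[OF assms(1)] by blast
  qed (use IH in blast)
qed simp

lemma strict_total_order_realised_by_list: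
  assumes "finite V"
    and irrefl: "\<And>c. c \<in> V \<Longrightarrow> \<not> prec c c"
    and trans: "\<And>c d e. c \<in> V \<Longrightarrow> d \<in> V \<Longrightarrow> e \<in> V \<Longrightarrow> prec c d \<Longrightarrow> prec d e \<Longrightarrow> prec c e"
    and total: "\<And>c d. c \<in> V \<Longrightarrow> d \<in> V \<Longrightarrow> c \<noteq> d \<Longrightarrow> prec c d \<or> prec d c"
  obtains xs :: "'a::linorder list"
  where "distinct xs" "set xs = V" "\<And>c d. c \<in> V \<Longrightarrow> d \<in> V \<Longrightarrow> precedes xs c d \<longleftrightarrow> prec c d"
proof -
  define key where "key c = card {e \<in> V. prec e c}" for c
  have key_less: "key c < key d" if "c \<in> V" "d \<in> V" "prec c d" for c d
  proof -
    have "{e \<in> V. prec e c} \<subset> {e \<in> V. prec e d}"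
      using that irrefl trans by blast
    then show ?thesis unfolding key_def using assms(1) by (simp add: psubset_card_mono)
  qed
  have key_iff: "key c < key d \<longleftrightarrow> prec c d" if "c \<in> V" "d \<in> V" for c d
    using key_less[OF that] key_less[OF that(2,1)] total[OF that] irrefl[OF that(1)]
    by (metis less_asym less_irrefl)
  have inj: "inj_on key V"
    by (rule inj_onI) (metis key_iff irrefl less_irrefl total)
  define xs where "xs = sort_key key (sorted_list_of_set V)"
  have xs: "distinct xs" "set xs = V" unfolding xs_def using assms(1) by auto
  have "sorted (map key xs)" unfolding xs_def by (rule sorted_sort_key)
  moreover have "distinct (map key xs)" using xs inj by (simp add: distinct_map)
  ultimately have "precedes xs c d \<longleftrightarrow> prec c d" if "c \<in> V" "d \<in> V" for c d
    using that xs inj key_iff precedes_map_inj[of key xs c d] precedes_sorted[of "map key xs"] by auto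
  with xs that show thesis by blast
qed

section \<open>The weak order\<close>

lemma permsD: "x \<in> perms n \<Longrightarrow> distinct x \<and> set x = {1..n} \<and> length x = n"
  unfolding perms_def by (auto dest: distinct_card)

lemma precedes_iff_not_precedes:
  "x \<in> perms n \<Longrightarrow> c \<noteq> d \<Longrightarrow>
   precedes x c d \<longleftrightarrow> c \<in> {1..n} \<and> d \<in> {1..n} \<and> \<not> precedes x d c"
  using permsD precedes_total precedes_asym precedesD by metis

lemma perms_eq_if_inversions_eq:
  assumes "x \<in> perms n" "y \<in> perms n" "inversions x = inversions y"
  shows "x = y"
proof (rule list_eq_if_precedes_eq)
  show dx: "distinct x" and dy: "distinct y" and "set x = set y" using assms(1,2) permsD by auto
  have greater: "precedes x c d \<longleftrightarrow> precedes y c d" if "d < c" for c d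
    using assms(3) that unfolding inversions_precedes by auto
  show "precedes x c d \<longleftrightarrow> precedes y c d" for c d
  proof (cases c d rule: linorder_cases)
    case less
    then show ?thesis
      using precedes_iff_not_precedes[OF assms(1)] precedes_iff_not_precedes[OF assms(2)] greater
      by (metis less_irrefl)
  qed (simp_all add: greater precedes_irrefl[OF dx] precedes_irrefl[OF dy])
qed

lemma weak_le_refl: "weak_le x x"
  unfolding weak_le_def by simp

lemma weak_le_trans: "weak_le x y \<Longrightarrow> weak_le y z \<Longrightarrow> weak_le x z"
  unfolding weak_le_def by auto

lemma weak_le_antisym: "x \<in> perms n \<Longrightarrow> y \<in> perms n \<Longrightarrow> weak_le x y \<Longrightarrow> weak_le y x \<Longrightarrow> x = y"
  unfolding weak_le_def using perms_eq_if_inversions_eq by blast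

definition value_pairs :: "nat \<Rightarrow> (nat \<times> nat) set" where
  "value_pairs n = {(a, b). a < b \<and> a \<in> {1..n} \<and> b \<in> {1..n}}"

lemma inversions_subset_value_pairs: "x \<in> perms n \<Longrightarrow> inversions x \<subseteq> value_pairs n"
  unfolding inversions_precedes value_pairs_def using permsD by (auto dest: precedesD)

lemma finite_inversions: "x \<in> perms n \<Longrightarrow> finite (inversions x)"
  by (rule finite_subset[OF inversions_subset_value_pairs])
    (auto simp: value_pairs_def intro: finite_subset[of _ "{1..n} \<times> {1..n}"])

lemma trans_inversions: "distinct x \<Longrightarrow> trans (inversions x)"
  unfolding inversions_precedes by (rule transI) (auto intro: precedes_trans)

lemma inversions_cotrans:
  "distinct x \<Longrightarrow> (a, c) \<in> inversions x \<Longrightarrow> a < b \<Longrightarrow> b < c \<Longrightarrow> b \<in> set x \<Longrightarrow>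
   (a, b) \<in> inversions x \<or> (b, c) \<in> inversions x"
  unfolding inversions_precedes
  by (smt (verit) case_prodD case_prodI mem_Collect_eq nat_neq_iff precedes_trans precedes_total precedesD)

definition swap_adj :: "'a list \<Rightarrow> nat \<Rightarrow> 'a list" where
  "swap_adj xs d = xs[d := xs ! Suc d, Suc d := xs ! d]"

lemma swap_adj_append1: "Suc d < length xs \<Longrightarrow> swap_adj (xs @ ys) d = swap_adj xs d @ ys"
  unfolding swap_adj_def by (simp add: list_update_append nth_append)

lemma swap_adj_append2: "swap_adj (xs @ ys) (length xs + d) = xs @ swap_adj ys d"
  unfolding swap_adj_def by (simp add: list_update_append nth_append)

lemma swap_adj_map: "Suc d < length xs \<Longrightarrow> swap_adj (map f xs) d = map f (swap_adj xs d)"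
  unfolding swap_adj_def by (simp add: map_update)

lemma swap_adj_eq:
  "Suc d < length xs \<Longrightarrow> swap_adj xs d = take d xs @ xs ! Suc d # xs ! d # drop (Suc (Suc d)) xs"
  unfolding swap_adj_def
  by (rule nth_equalityI) (auto simp: nth_append nth_list_update nth_Cons' min_def numeral_2_eq_2 Suc_diff_Suc)

lemma swap_adj_split:
  assumes "Suc d < length xs"
  obtains P b a S where "xs = P @ b # a # S" "swap_adj xs d = P @ a # b # S"
    "xs ! d = b" "xs ! Suc d = a"
  using that swap_adj_eq[OF assms] assms
  by (metis Cons_nth_drop_Suc Suc_lessD append_take_drop_id)

lemma swap_adj_perms: "x \<in> perms n \<Longrightarrow> Suc d < length x \<Longrightarrow> swap_adj x d \<in> perms n"
  unfolding perms_def swap_adj_def by (simp add: Suc_lessD)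

lemma descentsD: "d \<in> descents y \<Longrightarrow> Suc d < length y \<and> y ! Suc d < y ! d"
  unfolding descents_def by auto

lemma descent_inversion: "d \<in> descents y \<Longrightarrow> (y ! Suc d, y ! d) \<in> inversions y"
  unfolding descents_def inversions_def by auto

lemma inversions_swap_adj:
  assumes "distinct y" "d \<in> descents y"
  shows "inversions (swap_adj y d) = inversions y - {(y ! Suc d, y ! d)}"
proof -
  have "Suc d < length y" using descentsD[OF assms(2)] by simp
  then obtain P b a S where y: "y = P @ b # a # S" and sw: "swap_adj y d = P @ a # b # S"
    and ab: "y ! d = b" "y ! Suc d = a"
    by (rule swap_adj_split)
  have "a < b" using descentsD[OF assms(2)] ab by simp
  moreover have "distinct (P @ b # a # S)" using assms(1) y by simp
  ultimately show ?thesis unfolding inversions_precedes sw ab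
    by (simp only: y) (auto simp: precedes_append precedes_Cons dest: precedesD)
qed

lemma swap_adj_weak_le: "y \<in> perms n \<Longrightarrow> d \<in> descents y \<Longrightarrow> weak_le (swap_adj y d) y"
  unfolding weak_le_def using inversions_swap_adj permsD by blast

lemma weak_le_swap_adj_iff:
  "y \<in> perms n \<Longrightarrow> d \<in> descents y \<Longrightarrow>
   weak_le x (swap_adj y d) \<longleftrightarrow> weak_le x y \<and> (y ! Suc d, y ! d) \<notin> inversions x"
  unfolding weak_le_def using inversions_swap_adj permsD by blast

text \<open>Otherwise consecutive entries of \<open>y\<close> appear in the same order in \<open>x\<close>, forcing
  \<open>x = y\<close>.\<close>

lemma weak_less_obtains_descent:
  assumes x: "x \<in> perms n" and y: "y \<in> perms n" and "weak_le x y" "x \<noteq> y"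
  obtains d where "d \<in> descents y" "(y ! Suc d, y ! d) \<notin> inversions x"
proof -
  have "\<exists>d\<in>descents y. (y ! Suc d, y ! d) \<notin> inversions x"
  proof (rule ccontr)
    assume no_descent: "\<not> ?thesis"
    have dx: "distinct x" and dy: "distinct y" and sx: "set x = set y" using x y permsD by auto
    have adjacent: "precedes x (y ! i) (y ! Suc i)" if i: "Suc i < length y" for i
    proof (cases "y ! Suc i < y ! i")
      case True
      then have "(y ! Suc i, y ! i) \<in> inversions x"
        using no_descent i unfolding descents_def by blast
      then show ?thesis unfolding inversions_precedes by auto
    next
      case False
      have "y ! i \<noteq> y ! Suc i" using dy i by (simp add: nth_eq_iff_index_eq)
      then have lt: "y ! i < y ! Suc i" using False by auto
      have "precedes y (y ! i) (y ! Suc i)" unfolding precedes_def using i by blast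
      then have "(y ! i, y ! Suc i) \<notin> inversions y"
        using precedes_asym[OF dy] unfolding inversions_precedes by auto
      then have "(y ! i, y ! Suc i) \<notin> inversions x" using assms(3) unfolding weak_le_def by auto
      then show ?thesis using lt sx i precedes_total[of "y ! i" x "y ! Suc i"]
        unfolding inversions_precedes by auto
    qed
    have "precedes y c d \<Longrightarrow> precedes x c d" for c d
      using precedes_if_adjacent_precede[OF dx _ adjacent] sx by auto
    then have "inversions x = inversions y"
      using assms(3) unfolding weak_le_def inversions_precedes by auto
    then show False using perms_eq_if_inversions_eq x y \<open>x \<noteq> y\<close> by blast
  qed
  then show thesis using that by blast
qed

lemma weak_covers_swap_adj:
  assumes y: "y \<in> perms n" and d: "d \<in> descents y"
  shows "weak_covers n y (swap_adj y d)"
  unfolding weak_covers_def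
proof (intro conjI)
  have dy: "distinct y" using permsD[OF y] by auto
  have I: "inversions (swap_adj y d) = inversions y - {(y ! Suc d, y ! d)}"
    using inversions_swap_adj[OF dy d] .
  show sw: "swap_adj y d \<in> perms n" using swap_adj_perms[OF y] descentsD[OF d] by auto
  show "y \<in> perms n" by fact
  show "weak_le (swap_adj y d) y" using swap_adj_weak_le[OF y d] .
  show "swap_adj y d \<noteq> y" using I descent_inversion[OF d] by force
  show "\<not> (\<exists>z\<in>perms n. weak_le (swap_adj y d) z \<and> weak_le z y \<and> z \<noteq> swap_adj y d \<and> z \<noteq> y)"
  proof
    assume "\<exists>z\<in>perms n. weak_le (swap_adj y d) z \<and> weak_le z y \<and> z \<noteq> swap_adj y d \<and> z \<noteq> y"
    then obtain z where z: "z \<in> perms n" "weak_le (swap_adj y d) z" "weak_le z y"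
      "z \<noteq> swap_adj y d" "z \<noteq> y" by blast
    have "inversions z = inversions (swap_adj y d) \<or> inversions z = inversions y"
      using z(2,3) unfolding weak_le_def I by blast
    then show False using perms_eq_if_inversions_eq z sw y by metis
  qed
qed

lemma weak_covers_iff:
  assumes y: "y \<in> perms n"
  shows "weak_covers n y x \<longleftrightarrow> (\<exists>d\<in>descents y. x = swap_adj y d)"
proof
  assume cov: "weak_covers n y x"
  then have x: "x \<in> perms n" and "weak_le x y" "x \<noteq> y" unfolding weak_covers_def by auto
  then obtain d where d: "d \<in> descents y" "(y ! Suc d, y ! d) \<notin> inversions x"
    using weak_less_obtains_descent[OF x y] by blast
  have "weak_le x (swap_adj y d)" using weak_le_swap_adj_iff[OF y d(1)] \<open>weak_le x y\<close> d(2) by blast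
  moreover have "swap_adj y d \<noteq> y" "swap_adj y d \<in> perms n"
    using weak_covers_swap_adj[OF y d(1)] unfolding weak_covers_def by auto
  ultimately have "x = swap_adj y d"
    using cov swap_adj_weak_le[OF y d(1)] unfolding weak_covers_def by blast
  then show "\<exists>d\<in>descents y. x = swap_adj y d" using d(1) by blast
qed (use weak_covers_swap_adj[OF y] in blast)

lemma trancl_cotrans:
  fixes R :: "(nat \<times> nat) set"
  assumes "(a, c) \<in> R\<^sup>+" "a < b" "b < c"
    and cotrans: "\<And>a b c. (a, c) \<in> R \<Longrightarrow> a < b \<Longrightarrow> b < c \<Longrightarrow> (a, b) \<in> R \<or> (b, c) \<in> R"
  shows "(a, b) \<in> R\<^sup>+ \<or> (b, c) \<in> R\<^sup>+"
  using assms(1-3)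
proof (induction arbitrary: b rule: trancl_induct)
  case (base c)
  then show ?case using cotrans by blast
next
  case (step d c)
  consider "b < d" | "b = d" | "d < b" by arith
  then show ?case
  proof cases
    case 1
    then show ?thesis using step by (meson trancl.trancl_into_trancl)
  next
    case 3
    then have "(d, b) \<in> R \<or> (b, c) \<in> R" using cotrans step by blast
    then show ?thesis using step(1) by (meson r_into_trancl' trancl.trancl_into_trancl)
  qed (use step in blast)
qed

text \<open>The permutation puts \<open>c\<close> before \<open>d\<close> iff either \<open>d < c\<close> and \<open>(d, c) \<in> T\<close>, or
  \<open>c < d\<close> and \<open>(c, d) \<notin> T\<close>.\<close>

lemma inversion_set_realised:
  assumes sub: "T \<subseteq> value_pairs n" and "trans T"
    and cotrans: "\<And>a b c. (a, c) \<in> T \<Longrightarrow> a < b \<Longrightarrow> b < c \<Longrightarrow> (a, b) \<in> T \<or> (b, c) \<in> T"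
  obtains z where "z \<in> perms n" "inversions z = T"
proof -
  have T: "a < b \<and> a \<in> {1..n} \<and> b \<in> {1..n}" if "(a, b) \<in> T" for a b
    using sub that unfolding value_pairs_def by auto
  have Ttrans: "(a, b) \<in> T \<Longrightarrow> (b, c) \<in> T \<Longrightarrow> (a, c) \<in> T" for a b c
    using \<open>trans T\<close> unfolding trans_def by blast
  define prec where "prec c d \<longleftrightarrow> (d < c \<and> (d, c) \<in> T) \<or> (c < d \<and> (c, d) \<notin> T)" for c d
  have "prec c e" if cd: "prec c d" and de: "prec d e" for c d e
  proof -
    consider "c < d" "d < e" | "c < d" "e < d" | "d < c" "d < e" | "d < c" "e < d"
      using cd de unfolding prec_def by auto
    then show ?thesis
    proof cases
      case 1
      then show ?thesis using cd de cotrans[of c e d] unfolding prec_def by auto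
    next
      case 2
      then show ?thesis using cd de cotrans[of e d c] Ttrans[of c e d] unfolding prec_def
        by (cases c e rule: linorder_cases) auto
    next
      case 3
      then show ?thesis using cd de cotrans[of d c e] Ttrans[of d c e] unfolding prec_def
        by (cases c e rule: linorder_cases) auto
    next
      case 4
      then show ?thesis using cd de Ttrans[of e d c] unfolding prec_def by auto
    qed
  qed
  moreover have "\<not> prec c c" "c \<noteq> d \<Longrightarrow> prec c d \<or> prec d c" for c d
    unfolding prec_def by auto
  ultimately obtain z where z: "distinct z" "set z = {1..n}"
    and zprec: "\<And>c d. c \<in> {1..n} \<Longrightarrow> d \<in> {1..n} \<Longrightarrow> precedes z c d \<longleftrightarrow> prec c d"
    using strict_total_order_realised_by_list[of "{1..n}" prec] by blast
  have "precedes z b a \<longleftrightarrow> a \<in> {1..n} \<and> b \<in> {1..n} \<and> prec b a" for a b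
    using z(2) zprec precedesD[of z b a] by blast
  then have "inversions z = T" unfolding inversions_precedes prec_def using T by auto
  moreover have "z \<in> perms n" unfolding perms_def using z by auto
  ultimately show thesis using that by blast
qed

lemma inversions_join_realised:
  assumes x: "x \<in> perms n" and y: "y \<in> perms n"
  obtains z where "z \<in> perms n" "inversions z = (inversions x \<union> inversions y)\<^sup>+"
proof (rule inversion_set_realised)
  let ?R = "inversions x \<union> inversions y"
  have "?R \<subseteq> value_pairs n" using inversions_subset_value_pairs x y by auto
  moreover have "trans (value_pairs n)" unfolding trans_def value_pairs_def by auto
  ultimately show "?R\<^sup>+ \<subseteq> value_pairs n" by (metis trancl_id trancl_mono_subset)
  have "(a, b) \<in> ?R \<or> (b, c) \<in> ?R" if "(a, c) \<in> ?R" "a < b" "b < c" for a b c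
  proof -
    have "a \<in> {1..n}" "c \<in> {1..n}"
      using that(1) inversions_subset_value_pairs[OF x] inversions_subset_value_pairs[OF y]
      unfolding value_pairs_def by auto
    then have "b \<in> set x" "b \<in> set y" using that(2,3) permsD[OF x] permsD[OF y] by auto
    then show ?thesis using that inversions_cotrans permsD[OF x] permsD[OF y] by blast
  qed
  then show "(a, b) \<in> ?R\<^sup>+ \<or> (b, c) \<in> ?R\<^sup>+" if "(a, c) \<in> ?R\<^sup>+" "a < b" "b < c" for a b c
    using trancl_cotrans[OF that] by blast
qed (use that in auto)

lemma weak_join_eqI:
  assumes "z \<in> perms n" "weak_le x z" "weak_le y z"
    "\<And>w. w \<in> perms n \<Longrightarrow> weak_le x w \<Longrightarrow> weak_le y w \<Longrightarrow> weak_le z w"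
  shows "weak_join n x y = z"
  unfolding weak_join_def by (rule the_equality) (use assms weak_le_antisym in blast)+

lemma weak_meet_eqI:
  assumes "z \<in> perms n" "weak_le z x" "weak_le z y"
    "\<And>w. w \<in> perms n \<Longrightarrow> weak_le w x \<Longrightarrow> weak_le w y \<Longrightarrow> weak_le w z"
  shows "weak_meet n x y = z"
  unfolding weak_meet_def by (rule the_equality) (use assms weak_le_antisym in blast)+

lemma weak_join:
  assumes "x \<in> perms n" "y \<in> perms n"
  shows weak_join_perms: "weak_join n x y \<in> perms n"
    and weak_join_upper1: "weak_le x (weak_join n x y)"
    and weak_join_upper2: "weak_le y (weak_join n x y)"
    and weak_join_least:
      "\<And>w. w \<in> perms n \<Longrightarrow> weak_le x w \<Longrightarrow> weak_le y w \<Longrightarrow> weak_le (weak_join n x y) w"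
proof -
  obtain z where z: "z \<in> perms n" "inversions z = (inversions x \<union> inversions y)\<^sup>+"
    using inversions_join_realised[OF assms] .
  have ub: "weak_le x z" "weak_le y z" unfolding weak_le_def z(2) by auto
  have least: "weak_le z w" if "w \<in> perms n" "weak_le x w" "weak_le y w" for w
  proof -
    have "inversions x \<union> inversions y \<subseteq> inversions w" using that unfolding weak_le_def by auto
    moreover have "trans (inversions w)" using trans_inversions permsD[OF that(1)] by blast
    ultimately show ?thesis unfolding weak_le_def z(2) by (metis trancl_id trancl_mono_subset)
  qed
  have "weak_join n x y = z" using weak_join_eqI z(1) ub least by blast
  then show "weak_join n x y \<in> perms n" "weak_le x (weak_join n x y)" "weak_le y (weak_join n x y)"
    "\<And>w. w \<in> perms n \<Longrightarrow> weak_le x w \<Longrightarrow> weak_le y w \<Longrightarrow> weak_le (weak_join n x y) w"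
    using z(1) ub least by simp_all
qed

text \<open>Reversal is an order-reversing involution of the weak order, so meets are reversed joins
  of reversals.\<close>

lemma rev_perms: "x \<in> perms n \<Longrightarrow> rev x \<in> perms n"
  unfolding perms_def by auto

lemma inversions_rev: "x \<in> perms n \<Longrightarrow> inversions (rev x) = value_pairs n - inversions x"
proof -
  assume x: "x \<in> perms n"
  have "a < b \<Longrightarrow> precedes x a b \<longleftrightarrow> a \<in> {1..n} \<and> b \<in> {1..n} \<and> \<not> precedes x b a" for a b
    by (rule precedes_iff_not_precedes[OF x]) simp
  then show ?thesis unfolding inversions_precedes value_pairs_def precedes_rev by auto
qed

lemma weak_le_rev_iff: "x \<in> perms n \<Longrightarrow> y \<in> perms n \<Longrightarrow> weak_le (rev x) (rev y) \<longleftrightarrow> weak_le y x"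
  unfolding weak_le_def using inversions_rev inversions_subset_value_pairs by blast

lemma weak_meet:
  assumes x: "x \<in> perms n" and y: "y \<in> perms n"
  shows weak_meet_perms: "weak_meet n x y \<in> perms n"
    and weak_meet_lower1: "weak_le (weak_meet n x y) x"
    and weak_meet_lower2: "weak_le (weak_meet n x y) y"
    and weak_meet_greatest:
      "\<And>w. w \<in> perms n \<Longrightarrow> weak_le w x \<Longrightarrow> weak_le w y \<Longrightarrow> weak_le w (weak_meet n x y)"
proof -
  define z where "z = rev (weak_join n (rev x) (rev y))"
  have rxy: "rev x \<in> perms n" "rev y \<in> perms n" using x y rev_perms by auto
  have z: "z \<in> perms n" unfolding z_def using weak_join_perms[OF rxy] rev_perms by blast
  have "rev z = weak_join n (rev x) (rev y)" unfolding z_def by simp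
  then have zx: "weak_le z x" and zy: "weak_le z y"
    using weak_join_upper1[OF rxy] weak_join_upper2[OF rxy] weak_le_rev_iff z x y by metis+
  have greatest: "weak_le w z" if "w \<in> perms n" "weak_le w x" "weak_le w y" for w
  proof -
    have "weak_le (rev x) (rev w)" "weak_le (rev y) (rev w)"
      using that weak_le_rev_iff x y by auto
    then have "weak_le (rev z) (rev w)"
      using weak_join_least[OF rxy] rev_perms[OF that(1)] unfolding z_def by simp
    then show ?thesis using weak_le_rev_iff[OF z that(1)] by simp
  qed
  have "weak_meet n x y = z" using weak_meet_eqI z zx zy greatest by blast
  then show "weak_meet n x y \<in> perms n" "weak_le (weak_meet n x y) x" "weak_le (weak_meet n x y) y"
    "\<And>w. w \<in> perms n \<Longrightarrow> weak_le w x \<Longrightarrow> weak_le w y \<Longrightarrow> weak_le w (weak_meet n x y)"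
    using z zx zy greatest by simp_all
qed

lemma weak_join_absorb1: "x \<in> perms n \<Longrightarrow> y \<in> perms n \<Longrightarrow> weak_le y x \<Longrightarrow> weak_join n x y = x"
  by (rule weak_join_eqI) (auto simp: weak_le_refl)

lemma weak_join_absorb2: "x \<in> perms n \<Longrightarrow> y \<in> perms n \<Longrightarrow> weak_le x y \<Longrightarrow> weak_join n x y = y"
  by (rule weak_join_eqI) (auto simp: weak_le_refl)

lemma weak_meet_absorb1: "x \<in> perms n \<Longrightarrow> y \<in> perms n \<Longrightarrow> weak_le x y \<Longrightarrow> weak_meet n x y = x"
  by (rule weak_meet_eqI) (auto simp: weak_le_refl)

section \<open>Lattice congruences\<close>

lemma congruence_perms: "lattice_congruence n \<Theta> \<Longrightarrow> (x, y) \<in> \<Theta> \<Longrightarrow> x \<in> perms n \<and> y \<in> perms n"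
  unfolding lattice_congruence_def equiv_def refl_on_def by auto

lemma congruence_refl: "lattice_congruence n \<Theta> \<Longrightarrow> x \<in> perms n \<Longrightarrow> (x, x) \<in> \<Theta>"
  unfolding lattice_congruence_def equiv_def refl_on_def by auto

lemma congruence_sym: "lattice_congruence n \<Theta> \<Longrightarrow> (x, y) \<in> \<Theta> \<Longrightarrow> (y, x) \<in> \<Theta>"
  unfolding lattice_congruence_def equiv_def sym_def by auto

lemma congruence_trans:
  "lattice_congruence n \<Theta> \<Longrightarrow> (x, y) \<in> \<Theta> \<Longrightarrow> (y, z) \<in> \<Theta> \<Longrightarrow> (x, z) \<in> \<Theta>"
  unfolding lattice_congruence_def equiv_def trans_def by blast

lemma congruence_join:
  "lattice_congruence n \<Theta> \<Longrightarrow> (x, x') \<in> \<Theta> \<Longrightarrow> (y, y') \<in> \<Theta> \<Longrightarrow>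
   (weak_join n x y, weak_join n x' y') \<in> \<Theta>"
  unfolding lattice_congruence_def by blast

lemma congruence_meet:
  "lattice_congruence n \<Theta> \<Longrightarrow> (x, x') \<in> \<Theta> \<Longrightarrow> (y, y') \<in> \<Theta> \<Longrightarrow>
   (weak_meet n x y, weak_meet n x' y') \<in> \<Theta>"
  unfolding lattice_congruence_def by blast

lemma congruence_convex:
  assumes C: "lattice_congruence n \<Theta>" and "(a, c) \<in> \<Theta>" "b \<in> perms n" "weak_le a b" "weak_le b c"
  shows "(b, c) \<in> \<Theta>"
proof -
  have a: "a \<in> perms n" and c: "c \<in> perms n" using congruence_perms[OF C assms(2)] by auto
  have "(weak_join n b a, weak_join n b c) \<in> \<Theta>"
    using congruence_join[OF C congruence_refl[OF C assms(3)] assms(2)] .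
  then show ?thesis using weak_join_absorb1[OF assms(3) a assms(4)] weak_join_absorb2[OF assms(3) c assms(5)]
    by simp
qed

text \<open>Congruent permutations are both congruent to their join, and every cover on a maximal
  chain between a permutation and a congruent permutation above it is contracted.\<close>

lemma congruence_preserved_from_below:
  assumes C1: "lattice_congruence n \<Theta>1" and C2: "lattice_congruence N \<Theta>2"
    and h: "\<And>z. z \<in> perms n \<Longrightarrow> h z \<in> perms N"
    and covers: "\<And>z d. z \<in> perms n \<Longrightarrow> d \<in> descents z \<Longrightarrow> (swap_adj z d, z) \<in> \<Theta>1 \<Longrightarrow>
      (h (swap_adj z d), h z) \<in> \<Theta>2"
    and aw: "(a, w) \<in> \<Theta>1" and "weak_le a w"
  shows "(h a, h w) \<in> \<Theta>2"
proof -
  have a: "a \<in> perms n" and w: "w \<in> perms n" using congruence_perms[OF C1 aw] by auto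
  have "(h a, h z) \<in> \<Theta>2" if "z \<in> perms n" "weak_le a z" "weak_le z w" for z
    using that
  proof (induction "card (inversions z)" arbitrary: z rule: less_induct)
    case less
    show ?case
    proof (cases "z = a")
      case True
      then show ?thesis using congruence_refl[OF C2 h[OF a]] by simp
    next
      case False
      obtain d where d: "d \<in> descents z" "(z ! Suc d, z ! d) \<notin> inversions a"
        using weak_less_obtains_descent[OF a less.prems(1,2)] False by metis
      have z': "swap_adj z d \<in> perms n" using swap_adj_perms[OF less.prems(1)] descentsD[OF d(1)] by simp
      have az': "weak_le a (swap_adj z d)" and z'z: "weak_le (swap_adj z d) z"
        using weak_le_swap_adj_iff[OF less.prems(1) d(1)] less.prems(2) d(2) swap_adj_weak_le[OF less.prems(1) d(1)]
        by auto
      have "inversions (swap_adj z d) \<subset> inversions z"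
        using inversions_swap_adj[OF _ d(1)] permsD[OF less.prems(1)] descent_inversion[OF d(1)] by auto
      then have "card (inversions (swap_adj z d)) < card (inversions z)"
        using finite_inversions[OF less.prems(1)] by (rule psubset_card_mono[rotated])
      then have "(h a, h (swap_adj z d)) \<in> \<Theta>2"
        using less.hyps z' az' z'z less.prems(3) weak_le_trans by blast
      moreover have "(swap_adj z d, z) \<in> \<Theta>1"
      proof -
        have "(swap_adj z d, w) \<in> \<Theta>1" "(z, w) \<in> \<Theta>1"
          using congruence_convex[OF C1 aw] z' az' z'z less.prems weak_le_trans by blast+
        then show ?thesis using congruence_sym[OF C1] congruence_trans[OF C1] by blast
      qed
      then have "(h (swap_adj z d), h z) \<in> \<Theta>2" using covers less.prems(1) d(1) by blast
      ultimately show ?thesis using congruence_trans[OF C2] by blast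
    qed
  qed
  then show ?thesis using w \<open>weak_le a w\<close> weak_le_refl by blast
qed

lemma congruence_preserved_if_covers_preserved:
  assumes C1: "lattice_congruence n \<Theta>1" and C2: "lattice_congruence N \<Theta>2"
    and h: "\<And>z. z \<in> perms n \<Longrightarrow> h z \<in> perms N"
    and covers: "\<And>z d. z \<in> perms n \<Longrightarrow> d \<in> descents z \<Longrightarrow> (swap_adj z d, z) \<in> \<Theta>1 \<Longrightarrow>
      (h (swap_adj z d), h z) \<in> \<Theta>2"
    and uu': "(u, u') \<in> \<Theta>1"
  shows "(h u, h u') \<in> \<Theta>2"
proof -
  have u: "u \<in> perms n" and u': "u' \<in> perms n" using congruence_perms[OF C1 uu'] by auto
  define w where "w = weak_join n u u'"
  have "(weak_join n u u, w) \<in> \<Theta>1" "(weak_join n u u', weak_join n u' u') \<in> \<Theta>1"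
    unfolding w_def using congruence_join[OF C1] congruence_refl[OF C1] u u' uu' by blast+
  then have "(u, w) \<in> \<Theta>1" "(u', w) \<in> \<Theta>1"
    using weak_join_absorb1[OF u u weak_le_refl] weak_join_absorb1[OF u' u' weak_le_refl]
      congruence_sym[OF C1] unfolding w_def by auto
  then have "(h u, h w) \<in> \<Theta>2" "(h u', h w) \<in> \<Theta>2"
    using congruence_preserved_from_below[OF C1 C2 h covers] weak_join_upper1[OF u u']
      weak_join_upper2[OF u u'] unfolding w_def by blast+
  then show ?thesis using congruence_sym[OF C2] congruence_trans[OF C2] by blast
qed

section \<open>Join-irreducibles and labels of covers\<close>

lemma join_irreducible_descent: "join_irreducible n g \<Longrightarrow> \<exists>d. descents g = {d}"
  unfolding join_irreducible_def by (simp add: card_1_singleton_iff)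

lemma lower_cover_swap_adj:
  assumes "join_irreducible n g" "descents g = {d}"
  shows "lower_cover n g = swap_adj g d"
proof -
  have "g \<in> perms n" using assms(1) unfolding join_irreducible_def by auto
  then show ?thesis unfolding lower_cover_def using assms(2) weak_covers_iff by (intro the_equality) auto
qed

lemma lower_cover:
  assumes J: "join_irreducible n g"
  shows lower_cover_perms: "lower_cover n g \<in> perms n"
    and lower_cover_less: "weak_le (lower_cover n g) g" "lower_cover n g \<noteq> g"
    and weak_le_lower_cover: "\<And>w. w \<in> perms n \<Longrightarrow> weak_le w g \<Longrightarrow> w \<noteq> g \<Longrightarrow> weak_le w (lower_cover n g)"
proof -
  obtain d where d: "descents g = {d}" using join_irreducible_descent[OF J] by blast
  have g: "g \<in> perms n" using J unfolding join_irreducible_def by auto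
  have cov: "weak_covers n g (lower_cover n g)"
    unfolding lower_cover_swap_adj[OF J d] using weak_covers_swap_adj[OF g] d by simp
  then show "lower_cover n g \<in> perms n" "weak_le (lower_cover n g) g" "lower_cover n g \<noteq> g"
    unfolding weak_covers_def by auto
  show "weak_le w (lower_cover n g)" if w: "w \<in> perms n" "weak_le w g" "w \<noteq> g" for w
  proof -
    obtain e where "e \<in> descents g" "(g ! Suc e, g ! e) \<notin> inversions w"
      using weak_less_obtains_descent[OF w(1) g w(2,3)] .
    then show ?thesis
      unfolding lower_cover_swap_adj[OF J d] using weak_le_swap_adj_iff[OF g] d w(2) by auto
  qed
qed

text \<open>A join-irreducible \<open>j\<close> with \<open>j \<le> y\<close>, \<open>j \<not>\<le> x\<close> and \<open>j\<^sub>* \<le> x\<close> for a cover \<open>x \<lessdot> y\<close>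
  has \<open>j \<or> x = y\<close> and \<open>j\<^sub>* \<or> x = x\<close>, and \<open>j \<and> x \<le> j\<^sub>*\<close>; hence \<open>x \<equiv> y\<close> iff \<open>j \<equiv> j\<^sub>*\<close>.\<close>

lemma congruence_cover_iff_contracts:
  assumes C: "lattice_congruence n \<Theta>" and J: "join_irreducible n j"
    and y: "y \<in> perms n" and d: "d \<in> descents y"
    and jy: "weak_le j y" and jx: "\<not> weak_le j (swap_adj y d)"
    and lx: "weak_le (lower_cover n j) (swap_adj y d)"
  shows "(swap_adj y d, y) \<in> \<Theta> \<longleftrightarrow> contracts n \<Theta> j"
proof -
  define x where "x = swap_adj y d"
  have cov: "weak_covers n y x" unfolding x_def using weak_covers_swap_adj[OF y d] .
  then have x: "x \<in> perms n" and xy: "weak_le x y" unfolding weak_covers_def by auto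
  have j: "j \<in> perms n" using J unfolding join_irreducible_def by auto
  note L = lower_cover[OF J]
  show ?thesis unfolding contracts_def x_def[symmetric]
  proof
    assume "(x, y) \<in> \<Theta>"
    then have "(weak_meet n j x, weak_meet n j y) \<in> \<Theta>"
      using congruence_meet[OF C congruence_refl[OF C j]] by blast
    then have "(weak_meet n j x, j) \<in> \<Theta>" using weak_meet_absorb1[OF j y jy] by simp
    moreover have "weak_le (weak_meet n j x) (lower_cover n j)"
      using L(4) weak_meet[OF j x] jx unfolding x_def by metis
    ultimately have "(lower_cover n j, j) \<in> \<Theta>"
      using congruence_convex[OF C] L(1,2) by blast
    then show "(j, lower_cover n j) \<in> \<Theta>" using congruence_sym[OF C] by blast
  next
    assume "(j, lower_cover n j) \<in> \<Theta>"
    then have "(weak_join n j x, weak_join n (lower_cover n j) x) \<in> \<Theta>"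
      using congruence_join[OF C _ congruence_refl[OF C x]] by blast
    moreover have "weak_join n (lower_cover n j) x = x"
      using weak_join_absorb2[OF L(1) x] lx unfolding x_def by simp
    moreover have "weak_join n j x = y"
    proof -
      have "weak_le (weak_join n j x) y" using weak_join_least[OF j x y jy xy] .
      moreover have "weak_join n j x \<noteq> x" using weak_join_upper1[OF j x] jx unfolding x_def by metis
      ultimately show ?thesis
        using cov weak_join[OF j x] unfolding weak_covers_def by blast
    qed
    ultimately show "(x, y) \<in> \<Theta>" using congruence_sym[OF C] by simp
  qed
qed

definition jirr_subset :: "nat \<Rightarrow> nat set \<Rightarrow> bool" where
  "jirr_subset n B \<longleftrightarrow> B \<subseteq> {1..n} \<and> (\<exists>b\<in>B. \<exists>c\<in>{1..n} - B. b < c)"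

lemma jirr_subsetD:
  assumes "jirr_subset n B"
  shows "B \<subseteq> {1..n}" "finite B" "Min B \<in> B" "Max ({1..n} - B) \<in> {1..n} - B"
    "Min B < Max ({1..n} - B)"
proof -
  show B: "B \<subseteq> {1..n}" using assms unfolding jirr_subset_def by auto
  then show fin: "finite B" using finite_subset by blast
  obtain b c where bc: "b \<in> B" "c \<in> {1..n} - B" "b < c" using assms unfolding jirr_subset_def by auto
  show "Min B \<in> B" using fin bc(1) Min_in by blast
  show "Max ({1..n} - B) \<in> {1..n} - B" using bc(2) Max_in[of "{1..n} - B"] by blast
  have "Min B \<le> b" "c \<le> Max ({1..n} - B)" using fin bc by simp_all
  then show "Min B < Max ({1..n} - B)" using bc(3) by linarith
qed

lemma jirr_of_perms: "B \<subseteq> {1..n} \<Longrightarrow> jirr_of n B \<in> perms n"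
  unfolding perms_def jirr_of_def using finite_subset[of B "{1..n}"] by auto

lemma inversions_jirr_of:
  assumes "B \<subseteq> {1..n}"
  shows "inversions (jirr_of n B) = {(a, c). a < c \<and> a \<in> B \<and> c \<in> {1..n} - B}"
proof -
  have "finite B" using assms finite_subset by blast
  then have "precedes (jirr_of n B) c d \<longleftrightarrow>
      (c \<in> {1..n} - B \<and> d \<in> {1..n} - B \<and> c < d) \<or> (c \<in> B \<and> d \<in> B \<and> c < d) \<or>
      (c \<in> {1..n} - B \<and> d \<in> B)" for c d
    unfolding jirr_of_def precedes_append by (simp add: precedes_sorted)
  then show ?thesis unfolding inversions_precedes using assms by auto
qed

lemma descents_jirr_of:
  assumes "jirr_subset n B"
  defines "k \<equiv> card ({1..n} - B)"
  shows "descents (jirr_of n B) = {k - 1}" "jirr_of n B ! (k - 1) = Max ({1..n} - B)"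
    "jirr_of n B ! k = Min B" "0 < k"
proof -
  note B = jirr_subsetD[OF assms(1)]
  define C where "C = {1..n} - B"
  define L1 where "L1 = sorted_list_of_set C"
  define L2 where "L2 = sorted_list_of_set B"
  have L1: "sorted_wrt (<) L1" "set L1 = C" "length L1 = k"
    unfolding L1_def k_def C_def by (auto simp: strict_sorted_list_of_set)
  have L2: "sorted_wrt (<) L2" "set L2 = B" "L2 \<noteq> []"
    unfolding L2_def using B by (auto simp: strict_sorted_list_of_set)
  show k: "0 < k" using B(4) unfolding k_def by (auto simp: card_gt_0_iff)
  have J: "jirr_of n B = L1 @ L2" unfolding jirr_of_def L1_def L2_def C_def by simp
  have "L1 ! (k - 1) = Max C"
    using Max_set_sorted[of L1] L1 k by (auto simp: last_conv_nth strict_sorted_imp_sorted)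
  then show Mx: "jirr_of n B ! (k - 1) = Max ({1..n} - B)" using J L1(3) k by (simp add: nth_append C_def)
  have "L2 ! 0 = Min B" using L2 B(2) unfolding L2_def by (simp add: sorted_list_of_set_nonempty)
  then show Mn: "jirr_of n B ! k = Min B" using J L1(3) by (simp add: nth_append)
  show "descents (jirr_of n B) = {k - 1}"
  proof
    show "{k - 1} \<subseteq> descents (jirr_of n B)"
      using Mx Mn B(5) k L2(3) J L1(3) unfolding descents_def by auto
    show "descents (jirr_of n B) \<subseteq> {k - 1}"
    proof
      fix i assume "i \<in> descents (jirr_of n B)"
      then have i: "Suc i < length (L1 @ L2)" "(L1 @ L2) ! Suc i < (L1 @ L2) ! i"
        unfolding descents_def J by auto
      have "\<not> Suc i < k"
        using i sorted_wrt_nth_less[OF L1(1), of i "Suc i"] L1(3) by (auto simp: nth_append)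
      moreover have "\<not> k \<le> i"
      proof
        assume "k \<le> i"
        then have "Suc (i - k) < length L2" "L2 ! Suc (i - k) < L2 ! (i - k)"
          using i L1(3) by (auto simp: nth_append Suc_diff_le)
        then show False using sorted_wrt_nth_less[OF L2(1), of "i - k" "Suc (i - k)"] by simp
      qed
      ultimately show "i \<in> {k - 1}" by simp
    qed
  qed
qed

lemma jirr_of_join_irreducible:
  assumes "jirr_subset n B"
  shows "join_irreducible n (jirr_of n B)" "assoc_subset (jirr_of n B) = B"
proof -
  note D = descents_jirr_of[OF assms]
  show "join_irreducible n (jirr_of n B)"
    unfolding join_irreducible_def using jirr_of_perms[OF jirr_subsetD(1)[OF assms]] D(1) by simp
  have "finite B" using jirr_subsetD[OF assms] by simp
  then show "assoc_subset (jirr_of n B) = B"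
    unfolding assoc_subset_def D(1) using D(4) by (simp add: jirr_of_def)
qed

lemma inversions_lower_cover_jirr_of:
  assumes "jirr_subset n B"
  shows "inversions (lower_cover n (jirr_of n B)) = inversions (jirr_of n B) - {(Min B, Max ({1..n} - B))}"
proof -
  note D = descents_jirr_of[OF assms]
  have "distinct (jirr_of n B)" using permsD jirr_of_perms jirr_subsetD(1)[OF assms] by blast
  moreover have "Suc (card ({1..n} - B) - 1) = card ({1..n} - B)" using D(4) by simp
  ultimately show ?thesis
    unfolding lower_cover_swap_adj[OF jirr_of_join_irreducible(1)[OF assms] D(1)]
    using inversions_swap_adj D by simp
qed

lemma join_irreducible_eq_jirr_of:
  assumes "join_irreducible n g"
  shows "jirr_subset n (assoc_subset g)" "g = jirr_of n (assoc_subset g)"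
proof -
  obtain d where d: "descents g = {d}" using join_irreducible_descent[OF assms] by blast
  have g: "distinct g" "set g = {1..n}" using assms permsD unfolding join_irreducible_def by auto
  have dd: "Suc d < length g" "g ! Suc d < g ! d" using descentsD[of d g] d by auto
  define P where "P = take (Suc d) g"
  define A where "A = assoc_subset g"
  have A: "A = set (drop (Suc d) g)" unfolding A_def assoc_subset_def d by simp
  have gPA: "g = P @ drop (Suc d) g" unfolding P_def by simp
  have ascent: "g ! i < g ! Suc i" if "Suc i < length g" "i \<noteq> d" for i
  proof -
    have "\<not> g ! Suc i < g ! i" using d that unfolding descents_def by auto
    moreover have "g ! i \<noteq> g ! Suc i" using g(1) that by (simp add: nth_eq_iff_index_eq)
    ultimately show ?thesis by simp
  qed
  have sorted: "sorted P" "sorted (drop (Suc d) g)"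
    unfolding P_def sorted_iff_nth_Suc using ascent dd(1) by (auto intro: less_imp_le)
  have dPA: "distinct (P @ drop (Suc d) g)" using g(1) unfolding P_def by simp
  have "set (P @ drop (Suc d) g) = {1..n}" using g(2) unfolding P_def by simp
  then have PA: "set P = {1..n} - A" using dPA unfolding A by auto
  have "P = sorted_list_of_set ({1..n} - A)"
    using sorted(1) PA dPA by (intro sorted_distinct_set_unique) auto
  moreover have "drop (Suc d) g = sorted_list_of_set A"
    using sorted(2) A g(1) by (intro sorted_distinct_set_unique) auto
  ultimately show "g = jirr_of n A" unfolding jirr_of_def using gPA by simp
  have "P = take d g @ [g ! d]" unfolding P_def using dd(1) by (simp add: take_Suc_conv_app_nth)
  then have "g ! d \<in> {1..n} - A" using PA by auto
  moreover have "g ! Suc d \<in> A" unfolding A using dd(1) by (simp add: Cons_nth_drop_Suc[symmetric])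
  moreover have "A \<subseteq> {1..n}" unfolding A using g(2) by (metis set_drop_subset)
  ultimately show "jirr_subset n A" unfolding jirr_subset_def using dd(2) by blast
qed

text \<open>For the cover \<open>x \<lessdot> y\<close> that swaps the descent values \<open>a = y ! Suc d < b = y ! d\<close>, the
  join-irreducible with this associated subset lies below \<open>y\<close> but not below \<open>x\<close>.\<close>

definition cover_label :: "nat \<Rightarrow> nat list \<Rightarrow> nat \<Rightarrow> nat set" where
  "cover_label N y d = insert (y ! Suc d)
     ({c \<in> set (drop (Suc (Suc d)) y). y ! Suc d < c \<and> c < y ! d} \<union> {c. y ! d < c \<and> c \<le> N})"

lemma cover_label:
  assumes y: "y \<in> perms N" and d: "d \<in> descents y"
  shows cover_label_jirr_subset: "jirr_subset N (cover_label N y d)"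
    and Min_cover_label: "Min (cover_label N y d) = y ! Suc d"
    and Max_cover_label: "Max ({1..N} - cover_label N y d) = y ! d"
proof -
  define a where "a = y ! Suc d"
  define b where "b = y ! d"
  define B where "B = cover_label N y d"
  have B: "B = insert a ({c \<in> set (drop (Suc (Suc d)) y). a < c \<and> c < b} \<union> {c. b < c \<and> c \<le> N})"
    unfolding B_def cover_label_def a_def b_def ..
  have ab: "a < b" "a \<in> {1..N}" "b \<in> {1..N}"
    using descentsD[OF d] permsD[OF y] nth_mem[of _ y] unfolding a_def b_def by auto
  have "set (drop (Suc (Suc d)) y) \<subseteq> {1..N}" using permsD[OF y] by (metis set_drop_subset)
  then have sub: "B \<subseteq> {1..N}" unfolding B using ab by auto
  have "a \<in> B" "b \<notin> B" unfolding B using ab by auto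
  then show "jirr_subset N B" unfolding jirr_subset_def using sub ab by blast
  show "Min B = a"
    using sub finite_subset[OF sub] \<open>a \<in> B\<close> ab(1) unfolding B by (intro Min_eqI) auto
  show "Max ({1..N} - B) = b"
    using \<open>b \<notin> B\<close> ab(3) unfolding B by (intro Max_eqI) auto
qed

lemma inversions_jirr_of_cover_label:
  assumes y: "y \<in> perms N" and d: "d \<in> descents y"
  shows "inversions (jirr_of N (cover_label N y d)) \<subseteq> inversions y"
proof
  define a where "a = y ! Suc d"
  define b where "b = y ! d"
  define B where "B = cover_label N y d"
  have B: "B = insert a ({c \<in> set (drop (Suc (Suc d)) y). a < c \<and> c < b} \<union> {c. b < c \<and> c \<le> N})"
    unfolding B_def cover_label_def a_def b_def ..
  have dd: "Suc d < length y" "a < b" using descentsD[OF d] unfolding a_def b_def by auto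
  have dy: "set y = {1..N}" using permsD[OF y] by simp
  fix p assume "p \<in> inversions (jirr_of N (cover_label N y d))"
  then obtain c e where p: "p = (c, e)" "c < e" "c \<in> B" "e \<in> {1..N}" "e \<notin> B"
    unfolding inversions_jirr_of[OF jirr_subsetD(1)[OF cover_label_jirr_subset[OF y d]]] B_def by auto
  have eb: "e \<le> b" using p(4,5) unfolding B by auto
  obtain jc where jc: "Suc d \<le> jc" "jc < length y" "y ! jc = c"
  proof -
    from p(3) consider "c = a" | "c \<in> set (drop (Suc (Suc d)) y)" | "b < c" unfolding B by auto
    then show thesis
    proof cases
      case 1 then show ?thesis using that dd(1) unfolding a_def by blast
    next
      case 2
      then obtain j where "Suc (Suc d) \<le> j" "j < length y" "y ! j = c" by (auto simp: in_set_drop_iff)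
      then show ?thesis using that[of j] by simp
    qed (use p(2) eb in auto)
  qed
  have "precedes y e c"
  proof (cases "e = b")
    case True
    then show ?thesis unfolding precedes_def b_def using jc Suc_le_lessD by blast
  next
    case False
    have "a \<le> c" using p(3) dd unfolding B by auto
    then have ae: "a < e" "e < b" using eb p(2) False by auto
    obtain je where je: "je < length y" "y ! je = e" using p(4) dy by (metis in_set_conv_nth)
    have "e \<notin> set (drop (Suc (Suc d)) y)" using p(5) ae unfolding B by auto
    then have "je < Suc (Suc d)" using je by (auto simp: in_set_drop_iff)
    moreover have "je \<noteq> d" "je \<noteq> Suc d" using False ae je unfolding a_def b_def by auto
    ultimately have "je < jc" using jc(1) by simp
    then show ?thesis unfolding precedes_def using je jc by blast
  qed
  then show "p \<in> inversions y" unfolding inversions_precedes using p by auto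
qed

lemma cover_contracted_iff_label_contracted:
  assumes C: "lattice_congruence N \<Theta>" and y: "y \<in> perms N" and d: "d \<in> descents y"
  shows "(swap_adj y d, y) \<in> \<Theta> \<longleftrightarrow> contracts N \<Theta> (jirr_of N (cover_label N y d))"
proof (rule congruence_cover_iff_contracts[OF C _ y d])
  define B where "B = cover_label N y d"
  have B: "jirr_subset N B" "Min B = y ! Suc d" "Max ({1..N} - B) = y ! d"
    using cover_label[OF y d] unfolding B_def by auto
  have inv_x: "inversions (swap_adj y d) = inversions y - {(y ! Suc d, y ! d)}"
    using inversions_swap_adj[OF _ d] permsD[OF y] by blast
  have "(y ! Suc d, y ! d) \<in> inversions (jirr_of N B)"
    using inversions_jirr_of[OF jirr_subsetD(1)[OF B(1)]] jirr_subsetD[OF B(1)] B(2,3) by auto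
  then show "\<not> weak_le (jirr_of N B) (swap_adj y d)" unfolding weak_le_def inv_x by blast
  show "join_irreducible N (jirr_of N B)" using jirr_of_join_irreducible[OF B(1)] by blast
  show "weak_le (jirr_of N B) y"
    unfolding weak_le_def B_def using inversions_jirr_of_cover_label[OF y d] .
  then show "weak_le (lower_cover N (jirr_of N B)) (swap_adj y d)"
    unfolding weak_le_def inv_x inversions_lower_cover_jirr_of[OF B(1)] B(2,3) by blast
qed

lemma cover_label_jirr_of:
  assumes A: "jirr_subset n A"
  shows "cover_label n (jirr_of n A) (card ({1..n} - A) - 1) = A"
proof -
  define k where "k = card ({1..n} - A)"
  define M where "M = Max ({1..n} - A)"
  note D = descents_jirr_of[OF A, folded k_def]
  note JA = jirr_subsetD[OF A, folded M_def]
  have sk: "Suc (k - 1) = k" using D(4) by simp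
  have "drop (Suc k) (jirr_of n A) = drop 1 (sorted_list_of_set A)"
    unfolding jirr_of_def k_def by simp
  also have "\<dots> = sorted_list_of_set (A - {Min A})"
  proof -
    have "sorted_list_of_set A = Min A # sorted_list_of_set (A - {Min A})"
      using sorted_list_of_set_nonempty JA(2,3) by blast
    then show ?thesis by simp
  qed
  finally have "set (drop (Suc k) (jirr_of n A)) = A - {Min A}" using JA(2) by simp
  then have "cover_label n (jirr_of n A) (k - 1) =
      insert (Min A) ({c \<in> A - {Min A}. Min A < c \<and> c < M} \<union> {c. M < c \<and> c \<le> n})"
    unfolding cover_label_def sk D(2,3) M_def by simp
  also have "\<dots> = A"
  proof (intro equalityI subsetI)
    fix c assume c: "c \<in> A"
    then have "Min A \<le> c" "c \<noteq> M" "c \<le> n" using JA(1,2,4) by auto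
    then show "c \<in> insert (Min A) ({c \<in> A - {Min A}. Min A < c \<and> c < M} \<union> {c. M < c \<and> c \<le> n})"
      using c by (auto simp: nat_neq_iff)
  next
    fix c assume "c \<in> insert (Min A) ({c \<in> A - {Min A}. Min A < c \<and> c < M} \<union> {c. M < c \<and> c \<le> n})"
    moreover have "c \<in> A" if "M < c" "c \<le> n"
    proof (rule ccontr)
      assume "c \<notin> A"
      then have "c \<le> M" using that JA(4) Max_ge[of "{1..n} - A" c] unfolding M_def by auto
      then show False using that(1) by simp
    qed
    ultimately show "c \<in> A" using JA(3) by auto
  qed
  finally show ?thesis unfolding k_def .
qed

section \<open>Insertions\<close>

definition skip :: "nat \<Rightarrow> nat \<Rightarrow> nat" where
  "skip s c = (if c < s then c else Suc c)"

definition unskip :: "nat \<Rightarrow> nat \<Rightarrow> nat" where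
  "unskip s c = (if c < s then c else c - 1)"

lemma skip_unskip: "t \<noteq> s \<Longrightarrow> skip s (unskip s t) = t"
  unfolding skip_def unskip_def by auto

lemma unskip_skip [simp]: "unskip s (skip s c) = c"
  unfolding skip_def unskip_def by auto

lemma skip_neq: "skip s c \<noteq> s"
  unfolding skip_def by auto

lemma unskip_less: "x < y \<Longrightarrow> x \<noteq> s \<Longrightarrow> y \<noteq> s \<Longrightarrow> unskip s x < unskip s y"
  unfolding unskip_def by auto

lemma unskip_range: "t \<in> {1..Suc N} \<Longrightarrow> s \<in> {1..Suc N} \<Longrightarrow> t \<noteq> s \<Longrightarrow> unskip s t \<in> {1..N}"
  unfolding unskip_def by auto

lemma skip_range: "c \<in> {1..N} \<Longrightarrow> skip s c \<in> {1..Suc N}"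
  unfolding skip_def by auto

lemma skip_image_preimage:
  assumes "B' \<subseteq> {1..Suc N}" "s \<in> {1..Suc N}"
  shows "skip s ` {c \<in> {1..N}. skip s c \<in> B'} = B' - {s}"
proof (intro equalityI subsetI)
  fix x assume x: "x \<in> B' - {s}"
  then have "unskip s x \<in> {1..N}" using assms unskip_range by blast
  then show "x \<in> skip s ` {c \<in> {1..N}. skip s c \<in> B'}"
    using x skip_unskip[of x s] by (intro image_eqI[of _ _ "unskip s x"]) auto
qed (auto simp: skip_neq)

lemma R_ins_eq_jirr_of:
  "assoc_subset g \<subseteq> {1..n} \<Longrightarrow> R_ins n i g = jirr_of (Suc n) (insert i (skip i ` assoc_subset g))"
  unfolding R_ins_def skip_def Let_def by (rule arg_cong[where f = "jirr_of (Suc n)"]) (auto; force)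

lemma L_ins_eq_jirr_of:
  "assoc_subset g \<subseteq> {1..n} \<Longrightarrow> L_ins n i g = jirr_of (Suc n) (skip i ` assoc_subset g)"
  unfolding L_ins_def skip_def Let_def by (rule arg_cong[where f = "jirr_of (Suc n)"]) (auto; force)

text \<open>The right-hand side of the theorem in terms of associated subsets, on which \<open>R\<^sub>i\<close> and \<open>L\<^sub>i\<close>
  act as \<open>insert i \<circ> skip i\<close> and \<open>skip i\<close>.\<close>

definition insertion_closed :: "(nat \<Rightarrow> (nat list \<times> nat list) set) \<Rightarrow> bool" where
  "insertion_closed \<Theta> \<longleftrightarrow> (\<forall>n B. jirr_subset n B \<and> contracts n (\<Theta> n) (jirr_of n B) \<longrightarrow>
     (\<forall>i\<in>{Min B + 1..Max ({1..n} - B) + 1}.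
        contracts (Suc n) (\<Theta> (Suc n)) (jirr_of (Suc n) (insert i (skip i ` B)))) \<and>
     (\<forall>i\<in>{Min B..Max ({1..n} - B)}. contracts (Suc n) (\<Theta> (Suc n)) (jirr_of (Suc n) (skip i ` B))))"

lemma insertion_closed_iff:
  "insertion_closed \<Theta> \<longleftrightarrow>
    (\<forall>n g. join_irreducible n g \<and> contracts n (\<Theta> n) g \<longrightarrow>
       (let A = assoc_subset g; m = Min A; M = Max ({1..n} - A) in
         (\<forall>i\<in>{m+1..M+1}. contracts (Suc n) (\<Theta> (Suc n)) (R_ins n i g)) \<and>
         (\<forall>i\<in>{m..M}. contracts (Suc n) (\<Theta> (Suc n)) (L_ins n i g))))"
    (is "_ \<longleftrightarrow> (\<forall>n g. ?contracted n g \<longrightarrow> ?insertions n g)")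
proof -
  have jirr_of_iff: "?insertions n (jirr_of n B) \<longleftrightarrow>
      (\<forall>i\<in>{Min B + 1..Max ({1..n} - B) + 1}.
         contracts (Suc n) (\<Theta> (Suc n)) (jirr_of (Suc n) (insert i (skip i ` B)))) \<and>
      (\<forall>i\<in>{Min B..Max ({1..n} - B)}. contracts (Suc n) (\<Theta> (Suc n)) (jirr_of (Suc n) (skip i ` B)))"
    if "jirr_subset n B" for n B
    using jirr_of_join_irreducible[OF that] jirr_subsetD(1)[OF that]
      R_ins_eq_jirr_of[of "jirr_of n B" n] L_ins_eq_jirr_of[of "jirr_of n B" n] by (simp add: Let_def)
  show ?thesis
  proof
    assume H: "insertion_closed \<Theta>"
    show "\<forall>n g. ?contracted n g \<longrightarrow> ?insertions n g"
    proof (intro allI impI)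
      fix n g assume g: "?contracted n g"
      then have A: "jirr_subset n (assoc_subset g)" "g = jirr_of n (assoc_subset g)"
        using join_irreducible_eq_jirr_of by auto
      then have "?insertions n (jirr_of n (assoc_subset g))"
        using H g jirr_of_iff[OF A(1)] unfolding insertion_closed_def by simp
      then show "?insertions n g" using A(2) by simp
    qed
  next
    assume H: "\<forall>n g. ?contracted n g \<longrightarrow> ?insertions n g"
    show "insertion_closed \<Theta>" unfolding insertion_closed_def
    proof (intro allI impI, goal_cases)
      case (1 n B)
      then show ?case using H jirr_of_iff[of n B] jirr_of_join_irreducible[of n B] by blast
    qed
  qed
qed

text \<open>Insertions outside the ranges of \<open>insertion_closed\<close> give nothing new.\<close>

lemma skip_image_below_Min:
  assumes "finite B" "i \<le> Min B"
  shows "skip i ` B = skip (Min B) ` B"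
proof (rule image_cong[OF refl])
  fix b assume "b \<in> B"
  then have "Min B \<le> b" using assms(1) by simp
  then show "skip i b = skip (Min B) b" using assms(2) unfolding skip_def by simp
qed

lemma insert_skip_image_above:
  assumes "B \<subseteq> {1..n}" "{Suc M..n} \<subseteq> B" "Suc M \<le> i" "i \<le> Suc n"
  shows "insert i (skip i ` B) = insert (Suc M) (skip (Suc M) ` B)"
proof -
  have "insert j (skip j ` B) = B \<inter> {1..M} \<union> {Suc M..Suc n}" if "Suc M \<le> j" "j \<le> Suc n" for j
  proof (intro equalityI subsetI)
    fix x assume "x \<in> insert j (skip j ` B)"
    then show "x \<in> B \<inter> {1..M} \<union> {Suc M..Suc n}"
      using assms(1) that unfolding skip_def by (cases "x \<le> M") (auto split: if_splits)
  next
    fix x assume x: "x \<in> B \<inter> {1..M} \<union> {Suc M..Suc n}"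
    consider "x < j" | "x = j" | "j < x" by arith
    then show "x \<in> insert j (skip j ` B)"
    proof cases
      case 1
      then have "x \<in> B" using x assms(2) that by auto
      then show ?thesis using 1 unfolding skip_def by force
    next
      case 3
      then have "x - 1 \<in> {Suc M..n}" "j \<le> x - 1" using x that by auto
      then have "x - 1 \<in> B" "j \<le> x - 1" using assms(2) by auto
      then show ?thesis unfolding skip_def using 3 by (intro insertI2 image_eqI[of _ _ "x - 1"]) auto
    qed simp
  qed
  then show ?thesis using assms(3,4) by simp
qed

lemma insertion_closed_contracts_insertion:
  assumes H: "insertion_closed \<Theta>" and B: "jirr_subset n B"
    and c: "contracts n (\<Theta> n) (jirr_of n B)" and s: "s \<in> {1..Suc n}"
  shows "Min B < s \<Longrightarrow> contracts (Suc n) (\<Theta> (Suc n)) (jirr_of (Suc n) (insert s (skip s ` B)))"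
    and "s \<le> Max ({1..n} - B) \<Longrightarrow> contracts (Suc n) (\<Theta> (Suc n)) (jirr_of (Suc n) (skip s ` B))"
proof -
  define m where "m = Min B"
  define M where "M = Max ({1..n} - B)"
  note JB = jirr_subsetD[OF B, folded m_def M_def]
  note closed = H[unfolded insertion_closed_def, rule_format, OF conjI[OF B c], folded m_def M_def]
  have R: "contracts (Suc n) (\<Theta> (Suc n)) (jirr_of (Suc n) (insert i (skip i ` B)))"
    if "i \<in> {m + 1..M + 1}" for i
    using closed that by blast
  have L: "contracts (Suc n) (\<Theta> (Suc n)) (jirr_of (Suc n) (skip i ` B))" if "i \<in> {m..M}" for i
    using closed that by blast
  show "contracts (Suc n) (\<Theta> (Suc n)) (jirr_of (Suc n) (insert s (skip s ` B)))" if "Min B < s"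
  proof (cases "s \<le> M + 1")
    case True
    then show ?thesis using R that unfolding m_def by simp
  next
    case False
    have above: "{Suc M..n} \<subseteq> B"
    proof
      fix x assume x: "x \<in> {Suc M..n}"
      show "x \<in> B"
      proof (rule ccontr)
        assume "x \<notin> B"
        then have "x \<le> M" using x Max_ge[of "{1..n} - B" x] unfolding M_def by auto
        then show False using x by simp
      qed
    qed
    then have "insert s (skip s ` B) = insert (Suc M) (skip (Suc M) ` B)"
      using insert_skip_image_above[OF JB(1) above, of s] False s by simp
    then show ?thesis using R[of "Suc M"] JB(5) by simp
  qed
  show "contracts (Suc n) (\<Theta> (Suc n)) (jirr_of (Suc n) (skip s ` B))" if "s \<le> Max ({1..n} - B)"
  proof (cases "m \<le> s")
    case True
    then show ?thesis using L that unfolding M_def by simp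
  next
    case False
    then show ?thesis using L[of m] JB(5) skip_image_below_Min[OF JB(2), of s] unfolding m_def by simp
  qed
qed

lemma strict_mono_on_onto_eq_id:
  fixes f :: "nat \<Rightarrow> nat"
  assumes f: "strict_mono_on {1..n} f" and onto: "f ` {1..n} = {1..n}" and k: "k \<in> {1..n}"
  shows "f k = k"
proof -
  have le_iff: "f i \<le> f j \<longleftrightarrow> i \<le> j" if "i \<in> {1..n}" "j \<in> {1..n}" for i j
    using strict_mono_on_less_eq[OF f that] .
  have "f ` {1..k} = {1..f k}"
  proof
    show "f ` {1..k} \<subseteq> {1..f k}" using k onto le_iff by auto
    show "{1..f k} \<subseteq> f ` {1..k}"
    proof
      fix v assume v: "v \<in> {1..f k}"
      moreover have "f k \<in> {1..n}" using k onto by blast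
      ultimately have "v \<in> f ` {1..n}" using onto by auto
      then obtain j where "j \<in> {1..n}" "v = f j" by blast
      then show "v \<in> f ` {1..k}" using v le_iff k by auto
    qed
  qed
  moreover have "inj_on f {1..k}"
    using k by (intro inj_on_subset[OF strict_mono_on_imp_inj_on[OF f]]) auto
  then have "card (f ` {1..k}) = k" by (simp add: card_image)
  ultimately show ?thesis by simp
qed

text \<open>\<open>B'\<close> arises from \<open>B\<close> by inserting the values outside the image of \<open>f\<close>, and each insertion
  is within the ranges of \<open>insertion_closed\<close> or equivalent to one that is.\<close>

definition admissible_extension :: "nat \<Rightarrow> nat set \<Rightarrow> nat \<Rightarrow> (nat \<Rightarrow> nat) \<Rightarrow> nat set \<Rightarrow> bool" where
  "admissible_extension n B N f B' \<longleftrightarrow>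
     strict_mono_on {1..n} f \<and> f ` {1..n} \<subseteq> {1..N} \<and> B' \<subseteq> {1..N} \<and>
     (\<forall>k\<in>{1..n}. k \<in> B \<longleftrightarrow> f k \<in> B') \<and>
     (\<forall>t\<in>{1..N} - f ` {1..n}. (t \<in> B' \<longrightarrow> f (Min B) < t) \<and> (t \<notin> B' \<longrightarrow> t < f (Max ({1..n} - B))))"

lemma admissible_extension_onto:
  assumes ext: "admissible_extension n B N f B'" and B: "B \<subseteq> {1..n}" and onto: "{1..N} \<subseteq> f ` {1..n}"
  shows "N = n" "B' = B"
proof -
  have f: "strict_mono_on {1..n} f" and image: "f ` {1..n} = {1..N}"
    using ext onto unfolding admissible_extension_def by auto
  show "N = n" using card_image[OF strict_mono_on_imp_inj_on[OF f]] image by simp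
  then show "B' = B"
    using ext B strict_mono_on_onto_eq_id[OF f] image unfolding admissible_extension_def by auto
qed

lemma admissible_extension_jirr_subset:
  assumes ext: "admissible_extension n B N f B'" and B: "jirr_subset n B"
  shows "jirr_subset N B'"
proof -
  note JB = jirr_subsetD[OF B]
  have f: "strict_mono_on {1..n} f" "f ` {1..n} \<subseteq> {1..N}" and B': "B' \<subseteq> {1..N}"
    and mem: "\<forall>k\<in>{1..n}. k \<in> B \<longleftrightarrow> f k \<in> B'"
    using ext unfolding admissible_extension_def by auto
  have mM: "Min B \<in> {1..n}" "Max ({1..n} - B) \<in> {1..n}" using JB by auto
  then have "f (Max ({1..n} - B)) \<in> {1..N}" using f(2) by blast
  then have "f (Min B) \<in> B'" "f (Max ({1..n} - B)) \<in> {1..N} - B'" "f (Min B) < f (Max ({1..n} - B))"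
    using mem f mM JB strict_mono_onD[OF f(1)] by auto
  then show ?thesis unfolding jirr_subset_def using B' by blast
qed

lemma admissible_extension_unskip:
  assumes ext: "admissible_extension n B (Suc N) f B'" and B: "jirr_subset n B"
    and s: "s \<in> {1..Suc N}" "s \<notin> f ` {1..n}"
  shows "admissible_extension n B N (\<lambda>k. unskip s (f k)) {c \<in> {1..N}. skip s c \<in> B'}"
proof -
  define g where "g k = unskip s (f k)" for k
  define B'' where "B'' = {c \<in> {1..N}. skip s c \<in> B'}"
  define m where "m = Min B"
  define M where "M = Max ({1..n} - B)"
  have f: "strict_mono_on {1..n} f" "f ` {1..n} \<subseteq> {1..Suc N}"
    and mem: "\<And>k. k \<in> {1..n} \<Longrightarrow> k \<in> B \<longleftrightarrow> f k \<in> B'"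
    and out: "\<And>t. t \<in> {1..Suc N} - f ` {1..n} \<Longrightarrow> (t \<in> B' \<longrightarrow> f m < t) \<and> (t \<notin> B' \<longrightarrow> t < f M)"
    using ext unfolding admissible_extension_def m_def M_def by auto
  have f_ne: "f k \<noteq> s" if "k \<in> {1..n}" for k using s(2) that by auto
  have "strict_mono_on {1..n} g"
    using strict_mono_onD[OF f(1)] f_ne unskip_less unfolding g_def by (intro strict_mono_onI) auto
  moreover have g_range: "g ` {1..n} \<subseteq> {1..N}"
    using f(2) s(1) f_ne unskip_range unfolding g_def by blast
  moreover have "k \<in> B \<longleftrightarrow> g k \<in> B''" if "k \<in> {1..n}" for k
  proof -
    have "g k \<in> {1..N}" using g_range that by blast
    then show ?thesis using mem[OF that] skip_unskip[OF f_ne[OF that]] unfolding B''_def g_def by auto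
  qed
  moreover have "(t \<in> B'' \<longrightarrow> g m < t) \<and> (t \<notin> B'' \<longrightarrow> t < g M)" if t: "t \<in> {1..N} - g ` {1..n}" for t
  proof -
    have "skip s t \<notin> f ` {1..n}"
    proof
      assume "skip s t \<in> f ` {1..n}"
      then obtain k where "k \<in> {1..n}" "skip s t = f k" by blast
      then have "g k = t" unfolding g_def by (metis unskip_skip)
      then show False using t \<open>k \<in> {1..n}\<close> by blast
    qed
    then have "(skip s t \<in> B' \<longrightarrow> f m < skip s t) \<and> (skip s t \<notin> B' \<longrightarrow> skip s t < f M)"
      using out t skip_range by blast
    moreover have "t \<in> B'' \<longleftrightarrow> skip s t \<in> B'" unfolding B''_def using t by auto
    moreover have "m \<in> {1..n}" "M \<in> {1..n}" using jirr_subsetD[OF B] unfolding m_def M_def by auto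
    then have "f m \<noteq> s" "f M \<noteq> s" using f_ne by auto
    ultimately show ?thesis
      using unskip_less[of "f m" "skip s t" s] unskip_less[of "skip s t" "f M" s] skip_neq[of s t]
      unfolding g_def by auto
  qed
  ultimately show ?thesis
    unfolding admissible_extension_def g_def[symmetric] B''_def[symmetric] m_def[symmetric] M_def[symmetric]
    by (auto simp: B''_def)
qed

lemma insertion_closed_contracts_extension:
  assumes H: "insertion_closed \<Theta>" and B: "jirr_subset n B" and c: "contracts n (\<Theta> n) (jirr_of n B)"
  shows "admissible_extension n B N f B' \<Longrightarrow> contracts N (\<Theta> N) (jirr_of N B')"
proof (induction N arbitrary: f B')
  case 0
  then show ?case using admissible_extension_onto[OF _ jirr_subsetD(1)[OF B]] c by fastforce
next
  case (Suc N)
  define m where "m = Min B"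
  define M where "M = Max ({1..n} - B)"
  have B': "B' \<subseteq> {1..Suc N}"
    and out: "\<And>t. t \<in> {1..Suc N} - f ` {1..n} \<Longrightarrow> (t \<in> B' \<longrightarrow> f m < t) \<and> (t \<notin> B' \<longrightarrow> t < f M)"
    using Suc.prems unfolding admissible_extension_def m_def M_def by auto
  show ?case
  proof (cases "{1..Suc N} \<subseteq> f ` {1..n}")
    case True
    then show ?thesis using admissible_extension_onto[OF Suc.prems jirr_subsetD(1)[OF B]] c by simp
  next
    case False
    then obtain s where s: "s \<in> {1..Suc N}" "s \<notin> f ` {1..n}" by blast
    define g where "g k = unskip s (f k)" for k
    define B'' where "B'' = {c \<in> {1..N}. skip s c \<in> B'}"
    have ext: "admissible_extension n B N g B''"
      using admissible_extension_unskip[OF Suc.prems B s] unfolding g_def B''_def .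
    have jB'': "jirr_subset N B''" using admissible_extension_jirr_subset[OF ext B] .
    have IH: "contracts N (\<Theta> N) (jirr_of N B'')" using Suc.IH[OF ext] .
    have B'_eq: "skip s ` B'' = B' - {s}" using skip_image_preimage[OF B' s(1)] unfolding B''_def .
    have "g ` {1..n} \<subseteq> {1..N}" "\<forall>k\<in>{1..n}. k \<in> B \<longleftrightarrow> g k \<in> B''"
      using ext unfolding admissible_extension_def by auto
    moreover have "m \<in> B" "M \<notin> B" "m \<in> {1..n}" "M \<in> {1..n}"
      using jirr_subsetD[OF B] unfolding m_def M_def by auto
    ultimately have g_mM: "g m \<in> B''" "g M \<in> {1..N} - B''" by (auto simp: image_subset_iff)
    show ?thesis
    proof (cases "s \<in> B'")
      case True
      then have "f m < s" using out s by blast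
      moreover have "g m = f m" unfolding g_def unskip_def using \<open>f m < s\<close> by simp
      moreover have "Min B'' \<le> g m" using g_mM(1) jirr_subsetD(2)[OF jB''] by simp
      ultimately have "Min B'' < s" by simp
      moreover have "B' = insert s (skip s ` B'')" using True B'_eq by auto
      ultimately show ?thesis using insertion_closed_contracts_insertion(1)[OF H jB'' IH s(1)] by simp
    next
      case False
      then have "s < f M" using out s by blast
      moreover have "g M \<le> Max ({1..N} - B'')" using g_mM(2) by simp
      ultimately have "s \<le> Max ({1..N} - B'')" unfolding g_def unskip_def by simp
      moreover have "B' = skip s ` B''" using False B'_eq by auto
      ultimately show ?thesis using insertion_closed_contracts_insertion(2)[OF H jB'' IH s(1)] by simp
    qed
  qed
qed

section \<open>The shuffle \<open>\<phi>\<^sub>Q\<close>\<close>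

definition nth_least :: "nat set \<Rightarrow> nat \<Rightarrow> nat" where
  "nth_least S k = sorted_list_of_set S ! (k - 1)"

lemma nth_least:
  assumes "finite S" "card S = p"
  shows strict_mono_on_nth_least: "strict_mono_on {1..p} (nth_least S)"
    and image_nth_least: "nth_least S ` {1..p} = S"
proof -
  define L where "L = sorted_list_of_set S"
  have L: "sorted_wrt (<) L" "set L = S" "length L = p"
    unfolding L_def using assms by (auto simp: strict_sorted_list_of_set)
  show "strict_mono_on {1..p} (nth_least S)"
    unfolding nth_least_def L_def[symmetric] using sorted_wrt_nth_less[OF L(1)] L(3)
    by (intro strict_mono_onI) auto
  have "nth_least S ` {1..p} = (!) L ` {0..<p}"
    unfolding nth_least_def L_def[symmetric] image_Suc_lessThan[symmetric] image_image
    by (simp add: atLeast0LessThan)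
  then show "nth_least S ` {1..p} = S" using L(2,3) nth_image[of p L] by simp
qed

lemma card_le_nth_least:
  assumes "finite S" "card S = p" "k \<in> {1..p}"
  shows "card {b \<in> S. b \<le> nth_least S k} = k"
proof -
  note E = nth_least[OF assms(1,2)]
  have le_iff: "nth_least S j \<le> nth_least S k \<longleftrightarrow> j \<le> k" if "j \<in> {1..p}" for j
    using strict_mono_on_less_eq[OF E(1) that assms(3)] .
  have "{b \<in> S. b \<le> nth_least S k} = nth_least S ` {1..k}"
  proof (intro equalityI subsetI)
    fix b assume b: "b \<in> {b \<in> S. b \<le> nth_least S k}"
    then have "b \<in> nth_least S ` {1..p}" using E(2) by simp
    then obtain j where "j \<in> {1..p}" "b = nth_least S j" by blast
    with b have "j \<in> {1..p}" "b = nth_least S j" "b \<le> nth_least S k" by auto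
    then show "b \<in> nth_least S ` {1..k}" using le_iff by auto
  next
    fix b assume "b \<in> nth_least S ` {1..k}"
    then obtain j where "j \<in> {1..k}" "b = nth_least S j" by blast
    moreover have "j \<in> {1..p}" using \<open>j \<in> {1..k}\<close> assms(3) by auto
    ultimately show "b \<in> {b \<in> S. b \<le> nth_least S k}" using E(2) le_iff by auto
  qed
  moreover have "inj_on (nth_least S) {1..k}"
    using assms(3) by (intro inj_on_subset[OF strict_mono_on_imp_inj_on[OF E(1)]]) auto
  ultimately show ?thesis by (simp add: card_image)
qed

lemma nth_least_card_le:
  assumes "finite S" "c \<in> S"
  shows "nth_least S (card {b \<in> S. b \<le> c}) = c"
proof -
  obtain k where "k \<in> {1..card S}" "c = nth_least S k"
    using image_nth_least[OF assms(1) refl] assms(2) by blast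
  then show ?thesis using card_le_nth_least[OF assms(1) refl] by simp
qed

lemma st_map_nth_least:
  assumes "finite S" "card S = p" "u \<in> perms p"
  shows "st (map (nth_least S) u) = u"
proof -
  have u: "set u = {1..p}" using permsD[OF assms(3)] by simp
  then have "set (map (nth_least S) u) = S" using image_nth_least[OF assms(1,2)] by simp
  show ?thesis unfolding st_def \<open>set (map (nth_least S) u) = S\<close>
  proof (rule nth_equalityI)
    fix i assume "i < length (map (\<lambda>a. card {b \<in> S. b \<le> a}) (map (nth_least S) u))"
    then have "i < length u" "u ! i \<in> {1..p}" using u nth_mem[of i u] by auto
    then show "map (\<lambda>a. card {b \<in> S. b \<le> a}) (map (nth_least S) u) ! i = u ! i"
      using card_le_nth_least[OF assms(1,2)] by simp
  qed simp
qed

lemma map_nth_least_st: "distinct xs \<Longrightarrow> map (nth_least (set xs)) (st xs) = xs"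
  unfolding st_def by (intro nth_equalityI) (auto simp: nth_least_card_le)

lemma phi_eq:
  assumes Q: "Q \<subseteq> {1..p+q}" "card Q = p" and u: "u \<in> perms p" and v: "v \<in> perms q"
  defines "R \<equiv> {1..p+q} - Q"
  shows "phi p q Q u v = map (nth_least Q) u @ map (nth_least R) v"
    and "map (nth_least Q) u @ map (nth_least R) v \<in> perms (p + q)"
proof -
  define x where "x = map (nth_least Q) u @ map (nth_least R) v"
  have "finite Q" using Q(1) finite_subset by blast
  then have fin: "finite Q" "finite R" "card R = q"
    using Q card_Diff_subset[of Q "{1..p+q}"] unfolding R_def by auto
  have U: "distinct u" "set u = {1..p}" "length u = p" using permsD[OF u] by auto
  have V: "distinct v" "set v = {1..q}" "length v = q" using permsD[OF v] by auto
  have "distinct (map (nth_least Q) u)" "distinct (map (nth_least R) v)"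
    using U V strict_mono_on_imp_inj_on[OF strict_mono_on_nth_least] fin Q(2)
    by (simp_all add: distinct_map)
  moreover have setQ: "set (map (nth_least Q) u) = Q" and "set (map (nth_least R) v) = R"
    using U(2) V(2) image_nth_least fin Q(2) by simp_all
  ultimately show x: "x \<in> perms (p + q)"
    unfolding x_def perms_def R_def using Q(1) by auto
  have "take p x = map (nth_least Q) u" "drop p x = map (nth_least R) v" unfolding x_def using U(3) by auto
  then have char: "set (take p x) = Q \<and> st (take p x) = u \<and> st (drop p x) = v"
    using setQ st_map_nth_least[OF fin(1) Q(2) u] st_map_nth_least[OF fin(2,3) v] by (simp only:)
  show "phi p q Q u v = x" unfolding phi_def
  proof (rule the_equality)
    show "x \<in> perms (p + q) \<and> set (take p x) = Q \<and> st (take p x) = u \<and> st (drop p x) = v"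
      by (rule conjI[OF x char])
    fix x' assume x': "x' \<in> perms (p + q) \<and> set (take p x') = Q \<and> st (take p x') = u \<and> st (drop p x') = v"
    have X': "distinct x'" "set x' = {1..p+q}" using permsD x' by auto
    then have "set (take p x') \<inter> set (drop p x') = {}" "set (take p x') \<union> set (drop p x') = {1..p+q}"
      using set_take_disj_set_drop_if_distinct[of x' p p] by (auto simp flip: set_append)
    then have "set (drop p x') = R" unfolding R_def using x' by auto
    then have "take p x' = map (nth_least Q) u" "drop p x' = map (nth_least R) v"
      using map_nth_least_st[of "take p x'"] map_nth_least_st[of "drop p x'"] x' X'(1) by auto
    then show "x' = x" unfolding x_def by (metis append_take_drop_id)
  qed
qed

lemma descent_block:
  fixes F :: "nat \<Rightarrow> nat" and pre z post :: "nat list"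
  assumes z: "z \<in> perms p" and d: "d \<in> descents z" and F: "strict_mono_on {1..p} F"
  shows "length pre + d \<in> descents (pre @ map F z @ post)"
    and "swap_adj (pre @ map F z @ post) (length pre + d) = pre @ map F (swap_adj z d) @ post"
proof -
  have Z: "set z = {1..p}" "length z = p" using permsD[OF z] by auto
  have dd: "Suc d < p" "z ! Suc d < z ! d" using descentsD[OF d] Z(2) by auto
  have "z ! Suc d \<in> {1..p}" "z ! d \<in> {1..p}" using Z dd(1) nth_mem[of _ z] by auto
  then have "F (z ! Suc d) < F (z ! d)" using strict_mono_onD[OF F] dd(2) by blast
  then show "length pre + d \<in> descents (pre @ map F z @ post)"
    using dd(1) Z(2) unfolding descents_def by (simp add: nth_append)
  show "swap_adj (pre @ map F z @ post) (length pre + d) = pre @ map F (swap_adj z d) @ post"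
    using dd(1) Z(2) by (simp add: swap_adj_append2 swap_adj_append1 swap_adj_map)
qed

lemma cover_label_block:
  fixes F :: "nat \<Rightarrow> nat" and pre z post :: "nat list"
  defines "y \<equiv> pre @ map F z @ post"
  assumes z: "z \<in> perms p" and d: "d \<in> descents z" and F: "strict_mono_on {1..p} F"
    and y: "y \<in> perms N"
  shows "cover_label N y (length pre + d) =
      F ` cover_label p z d \<union> {t \<in> set post. F (z ! Suc d) < t} \<union> {t \<in> set pre. F (z ! d) < t}"
proof -
  define e where "e = length pre + d"
  define a where "a = z ! Suc d"
  define b where "b = z ! d"
  define D where "D = set (drop (Suc (Suc d)) z)"
  have Z: "set z = {1..p}" "length z = p" using permsD[OF z] by auto
  have dd: "Suc d < p" "a < b" using descentsD[OF d] Z(2) unfolding a_def b_def by auto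
  have ab: "a \<in> {1..p}" "b \<in> {1..p}" using Z dd(1) nth_mem[of _ z] unfolding a_def b_def by auto
  have D: "D \<subseteq> {1..p}" unfolding D_def using Z(1) by (metis set_drop_subset)
  have Y: "set pre \<inter> F ` {1..p} = {}" "set post \<inter> F ` {1..p} = {}"
    "set pre \<union> F ` {1..p} \<union> set post = {1..N}" "set pre \<inter> set post = {}"
    using permsD[OF y] Z(1) unfolding y_def by auto
  have label_z: "cover_label p z d = insert a ({c \<in> D. a < c \<and> c < b} \<union> {c. b < c \<and> c \<le> p})"
    unfolding cover_label_def a_def b_def D_def ..
  have "y ! e = F b" "y ! Suc e = F a" "set (drop (Suc (Suc e)) y) = F ` D \<union> set post"
    unfolding y_def e_def a_def b_def D_def using dd(1) Z(2) by (auto simp: nth_append drop_map)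
  then have label_y: "cover_label N y e =
      insert (F a) ({c \<in> F ` D \<union> set post. F a < c \<and> c < F b} \<union> {c. F b < c \<and> c \<le> N})"
    unfolding cover_label_def by simp
  have less_iff: "F j < F k \<longleftrightarrow> j < k" "F j = F k \<longleftrightarrow> j = k" if "j \<in> {1..p}" "k \<in> {1..p}" for j k
    using strict_mono_on_less[OF F that] strict_mono_on_eq[OF F that] by auto
  have "x \<in> cover_label N y e \<longleftrightarrow> x \<in> F ` cover_label p z d \<union> {t \<in> set post. F a < t} \<union> {t \<in> set pre. F b < t}"
    for x
  proof (cases "x \<in> F ` {1..p}")
    case True
    then obtain k where k: "k \<in> {1..p}" "x = F k" by blast
    have out: "x \<notin> set post" "x \<notin> set pre" "x \<le> N" using True Y by auto
    have "x \<in> F ` D \<longleftrightarrow> k \<in> D" using k less_iff D by auto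
    then have "x \<in> cover_label N y e \<longleftrightarrow> k = a \<or> (k \<in> D \<and> a < k \<and> k < b) \<or> b < k"
      unfolding label_y using k out less_iff ab by auto
    also have "\<dots> \<longleftrightarrow> k \<in> cover_label p z d" unfolding label_z using k by auto
    also have "\<dots> \<longleftrightarrow> x \<in> F ` cover_label p z d"
      using k less_iff label_z D ab by (auto 0 3)
    finally show ?thesis using out by blast
  next
    case False
    have "F ` cover_label p z d \<subseteq> F ` {1..p}" "F ` D \<subseteq> F ` {1..p}"
      using D ab unfolding label_z by auto
    then have "x \<notin> F ` cover_label p z d" "x \<notin> F ` D" "x \<noteq> F a" "x \<noteq> F b"
      using False ab by auto
    moreover have "x \<in> set pre \<or> x \<in> set post \<longleftrightarrow> x \<in> {1..N}" "\<not> (x \<in> set pre \<and> x \<in> set post)"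
      using False Y by auto
    moreover have "F a < F b" "1 \<le> F a" using less_iff ab dd(2) Y(3) by auto
    ultimately show ?thesis unfolding label_y by auto
  qed
  then show ?thesis unfolding a_def b_def e_def by blast
qed

lemma block_cover_contracted_iff:
  fixes F :: "nat \<Rightarrow> nat"
  assumes C: "lattice_congruence N \<Theta>" and z: "z \<in> perms p" and d: "d \<in> descents z"
    and F: "strict_mono_on {1..p} F" and y: "pre @ map F z @ post \<in> perms N"
  shows "(pre @ map F (swap_adj z d) @ post, pre @ map F z @ post) \<in> \<Theta> \<longleftrightarrow>
    contracts N \<Theta> (jirr_of N (F ` cover_label p z d \<union> {t \<in> set post. F (z ! Suc d) < t} \<union>
      {t \<in> set pre. F (z ! d) < t}))"
  using cover_contracted_iff_label_contracted[OF C y descent_block(1)[OF z d F]]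
  unfolding descent_block(2)[OF z d F] cover_label_block[OF z d F y] .

lemma insertion_closed_contracts_block_cover:
  fixes F :: "nat \<Rightarrow> nat"
  assumes C: "\<forall>n. lattice_congruence n (\<Theta> n)" and H: "insertion_closed \<Theta>"
    and z: "z \<in> perms p" and d: "d \<in> descents z" and contracted: "(swap_adj z d, z) \<in> \<Theta> p"
    and F: "strict_mono_on {1..p} F" and y: "pre @ map F z @ post \<in> perms N"
  shows "(pre @ map F (swap_adj z d) @ post, pre @ map F z @ post) \<in> \<Theta> N"
proof -
  define B where "B = cover_label p z d"
  define B' where "B' = F ` B \<union> {t \<in> set post. F (Min B) < t} \<union> {t \<in> set pre. F (Max ({1..p} - B)) < t}"
  have JB: "jirr_subset p B" "Min B = z ! Suc d" "Max ({1..p} - B) = z ! d"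
    using cover_label[OF z d] unfolding B_def by auto
  note B = jirr_subsetD[OF JB(1)]
  have Y: "distinct (pre @ map F z @ post)" "set pre \<union> F ` {1..p} \<union> set post = {1..N}"
    using permsD[OF y] permsD[OF z] by auto
  have "admissible_extension p B N F B'"
    unfolding admissible_extension_def
  proof (intro conjI ballI)
    show "strict_mono_on {1..p} F" by fact
    show "F ` {1..p} \<subseteq> {1..N}" using Y(2) by blast
    show "B' \<subseteq> {1..N}" unfolding B'_def using Y(2) B(1) by blast
    have "set pre \<inter> F ` {1..p} = {}" "set post \<inter> F ` {1..p} = {}"
      using Y(1) permsD[OF z] by auto
    then have F_out: "F k \<notin> set pre \<union> set post" if "k \<in> {1..p}" for k
      using that by blast
    show "k \<in> B \<longleftrightarrow> F k \<in> B'" if "k \<in> {1..p}" for k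
      unfolding B'_def using that F_out[OF that] B(1) strict_mono_on_eq[OF F] by blast
    fix t assume t: "t \<in> {1..N} - F ` {1..p}"
    have "Min B \<in> {1..p}" "Max ({1..p} - B) \<in> {1..p}" using B by auto
    then have "F (Min B) < F (Max ({1..p} - B))" "F (Min B) \<noteq> t" "F (Max ({1..p} - B)) \<noteq> t"
      using strict_mono_onD[OF F _ _ B(5)] t by auto
    moreover have "t \<notin> F ` B" "t \<in> set pre \<or> t \<in> set post" "\<not> (t \<in> set pre \<and> t \<in> set post)"
      using t Y B(1) by auto
    ultimately show "t \<in> B' \<longrightarrow> F (Min B) < t" "t \<notin> B' \<longrightarrow> t < F (Max ({1..p} - B))"
      unfolding B'_def by auto
  qed
  moreover have "contracts p (\<Theta> p) (jirr_of p B)"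
    using contracted cover_contracted_iff_label_contracted[OF C[rule_format] z d] unfolding B_def by blast
  ultimately have "contracts N (\<Theta> N) (jirr_of N B')"
    using insertion_closed_contracts_extension[OF H JB(1)] by blast
  then show ?thesis
    using block_cover_contracted_iff[OF C[rule_format] z d F y] JB(2,3) unfolding B'_def B_def by simp
qed

lemma insertion_closed_imp_insertional:
  assumes C: "\<forall>n. lattice_congruence n (\<Theta> n)" and H: "insertion_closed \<Theta>"
  shows "insertional \<Theta>"
  unfolding insertional_def
proof (intro allI impI, elim conjE)
  fix p q Q u u' v v'
  assume Q: "Q \<subseteq> {1..p + q}" "card Q = p" and uu': "(u, u') \<in> \<Theta> p" and vv': "(v, v') \<in> \<Theta> q"
  define R where "R = {1..p+q} - Q"
  have u: "u \<in> perms p" "u' \<in> perms p" using congruence_perms[OF C[rule_format] uu'] by auto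
  have v: "v \<in> perms q" "v' \<in> perms q" using congruence_perms[OF C[rule_format] vv'] by auto
  have fin: "finite Q" "finite R" "card R = q"
    using Q finite_subset card_Diff_subset[of Q "{1..p+q}"] unfolding R_def by auto
  note phi = phi_eq[OF Q, folded R_def]
  have "(phi p q Q u v, phi p q Q u' v) \<in> \<Theta> (p + q)"
  proof (rule congruence_preserved_if_covers_preserved[OF C[rule_format] C[rule_format] _ _ uu'])
    show "phi p q Q z v \<in> perms (p + q)" if "z \<in> perms p" for z using phi[OF that v(1)] by simp
    show "(phi p q Q (swap_adj z d) v, phi p q Q z v) \<in> \<Theta> (p + q)"
      if "z \<in> perms p" "d \<in> descents z" "(swap_adj z d, z) \<in> \<Theta> p" for z d
      using insertion_closed_contracts_block_cover[OF C H that strict_mono_on_nth_least[OF fin(1) Q(2)],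
          of "[]" "map (nth_least R) v"]
        phi[OF that(1) v(1)] phi[OF swap_adj_perms[OF that(1)] v(1)] descentsD[OF that(2)]
        permsD[OF that(1)] by simp
  qed
  moreover have "(phi p q Q u' v, phi p q Q u' v') \<in> \<Theta> (p + q)"
  proof (rule congruence_preserved_if_covers_preserved[OF C[rule_format] C[rule_format] _ _ vv'])
    show "phi p q Q u' z \<in> perms (p + q)" if "z \<in> perms q" for z using phi[OF u(2) that] by simp
    show "(phi p q Q u' (swap_adj z d), phi p q Q u' z) \<in> \<Theta> (p + q)"
      if "z \<in> perms q" "d \<in> descents z" "(swap_adj z d, z) \<in> \<Theta> q" for z d
      using insertion_closed_contracts_block_cover[OF C H that strict_mono_on_nth_least[OF fin(2,3)],
          of "map (nth_least Q) u'" "[]"]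
        phi[OF u(2) that(1)] phi[OF u(2) swap_adj_perms[OF that(1)]] descentsD[OF that(2)]
        permsD[OF that(1)] by simp
  qed
  ultimately show "(phi p q Q u v, phi p q Q u' v') \<in> \<Theta> (p + q)"
    using congruence_trans[OF C[rule_format]] by blast
qed

lemma nth_least_Diff_singleton:
  assumes i: "i \<in> {1..Suc n}" and k: "k \<in> {1..n}"
  shows "nth_least ({1..Suc n} - {i}) k = skip i k"
proof -
  define S where "S = {1..Suc n} - {i}"
  have "{b \<in> S. b \<le> skip i k} = (if k < i then {1..k} else {1..Suc k} - {i})"
    unfolding S_def skip_def using k i by auto
  then have "card {b \<in> S. b \<le> skip i k} = k" using i by auto
  moreover have "skip i k \<in> S" unfolding S_def skip_def using i k by auto
  ultimately show ?thesis using nth_least_card_le[of S "skip i k"] unfolding S_def by simp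
qed

lemma phi_singleton_right:
  assumes "i \<in> {1..Suc n}" "x \<in> perms n"
  shows "phi n 1 ({1..Suc n} - {i}) x [1] = map (nth_least ({1..Suc n} - {i})) x @ [i]"
    and "map (nth_least ({1..Suc n} - {i})) x @ [i] \<in> perms (Suc n)"
proof -
  have "{1..n + 1} - ({1..Suc n} - {i}) = {i}" "nth_least {i} 1 = i"
    using assms(1) unfolding nth_least_def by auto
  then show "phi n 1 ({1..Suc n} - {i}) x [1] = map (nth_least ({1..Suc n} - {i})) x @ [i]"
    and "map (nth_least ({1..Suc n} - {i})) x @ [i] \<in> perms (Suc n)"
    using phi_eq[of "{1..Suc n} - {i}" n 1 x "[1]"] assms by (auto simp: perms_def)
qed

lemma phi_singleton_left:
  assumes "i \<in> {1..Suc n}" "x \<in> perms n"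
  shows "phi 1 n {i} [1] x = [i] @ map (nth_least ({1..Suc n} - {i})) x"
    and "[i] @ map (nth_least ({1..Suc n} - {i})) x \<in> perms (Suc n)"
  using phi_eq[of "{i}" 1 n "[1]" x] assms by (auto simp: perms_def nth_least_def)

lemma insertional_insert_value:
  assumes C: "\<forall>n. lattice_congruence n (\<Theta> n)" and I: "insertional \<Theta>"
    and xz: "(x, z) \<in> \<Theta> n" and i: "i \<in> {1..Suc n}" and pre_post: "(pre, post) \<in> {([], [i]), ([i], [])}"
  defines "F \<equiv> nth_least ({1..Suc n} - {i})"
  shows "(pre @ map F x @ post, pre @ map F z @ post) \<in> \<Theta> (Suc n)"
proof -
  have x: "x \<in> perms n" and z: "z \<in> perms n" using congruence_perms[OF C[rule_format] xz] by auto
  have one: "([1], [1]) \<in> \<Theta> 1" using congruence_refl[OF C[rule_format]] by (simp add: perms_def)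
  have Q: "{1..Suc n} - {i} \<subseteq> {1..n + 1}" "card ({1..Suc n} - {i}) = n" "{i} \<subseteq> {1..1 + n}"
    "card {i} = 1" using i by auto
  from pre_post consider "pre = []" "post = [i]" | "pre = [i]" "post = []" by auto
  then show ?thesis
  proof cases
    case 1
    then show ?thesis
      using I[unfolded insertional_def, rule_format, where p = n and q = 1 and Q = "{1..Suc n} - {i}"
          and u = x and u' = z and v = "[1]" and v' = "[1]"]
        Q xz one phi_singleton_right(1)[OF i x] phi_singleton_right(1)[OF i z] unfolding F_def by simp
  next
    case 2
    then show ?thesis
      using I[unfolded insertional_def, rule_format, where p = 1 and q = n and Q = "{i}"
          and u = "[1]" and u' = "[1]" and v = x and v' = z]
        Q xz one phi_singleton_left(1)[OF i x] phi_singleton_left(1)[OF i z] unfolding F_def by simp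
  qed
qed

text \<open>The converse direction applies \<open>\<phi>\<close> to the contracted cover \<open>\<gamma>\<^sub>* \<lessdot> \<gamma>\<close> and the
  permutation \<open>1 \<in> S\<^sub>1\<close>, placing the new value \<open>i\<close> last (for \<open>R\<^sub>i\<close>) or first (for \<open>L\<^sub>i\<close>).\<close>

lemma insertional_contracts_one_point_label:
  assumes C: "\<forall>n. lattice_congruence n (\<Theta> n)" and I: "insertional \<Theta>"
    and B: "jirr_subset n B" and c: "contracts n (\<Theta> n) (jirr_of n B)" and i: "i \<in> {1..Suc n}"
    and pre_post: "(pre, post) \<in> {([], [i]), ([i], [])}"
  shows "contracts (Suc n) (\<Theta> (Suc n)) (jirr_of (Suc n) (skip i ` B \<union>
    {t \<in> set post. skip i (Min B) < t} \<union> {t \<in> set pre. skip i (Max ({1..n} - B)) < t}))"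
proof -
  define g where "g = jirr_of n B"
  define d where "d = card ({1..n} - B) - 1"
  define F where "F = nth_least ({1..Suc n} - {i})"
  note D = descents_jirr_of[OF B, folded g_def d_def]
  note JB = jirr_subsetD[OF B]
  have g: "g \<in> perms n" unfolding g_def using jirr_of_perms[OF JB(1)] .
  have d: "d \<in> descents g" using D(1) by simp
  have "lower_cover n g = swap_adj g d"
    using lower_cover_swap_adj[OF jirr_of_join_irreducible(1)[OF B, folded g_def] D(1)] .
  then have "(swap_adj g d, g) \<in> \<Theta> n"
    using c congruence_sym[OF C[rule_format]] unfolding contracts_def g_def by simp
  then have "(pre @ map F (swap_adj g d) @ post, pre @ map F g @ post) \<in> \<Theta> (Suc n)"
    using insertional_insert_value[OF C I _ i pre_post] unfolding F_def by blast
  moreover have "pre @ map F g @ post \<in> perms (Suc n)"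
    using pre_post phi_singleton_right(2)[OF i g] phi_singleton_left(2)[OF i g] unfolding F_def by auto
  moreover have F: "strict_mono_on {1..n} F"
    using strict_mono_on_nth_least[of "{1..Suc n} - {i}" n] i unfolding F_def by auto
  ultimately have "contracts (Suc n) (\<Theta> (Suc n)) (jirr_of (Suc n)
      (F ` cover_label n g d \<union> {t \<in> set post. F (g ! Suc d) < t} \<union> {t \<in> set pre. F (g ! d) < t}))"
    using block_cover_contracted_iff[OF C[rule_format] g d F] by blast
  moreover have "F ` B = skip i ` B"
    using nth_least_Diff_singleton[OF i] JB(1) unfolding F_def by (intro image_cong) auto
  moreover have "g ! Suc d = Min B" "g ! d = Max ({1..n} - B)" using D(2-4) unfolding d_def by auto
  moreover have "Min B \<in> {1..n}" "Max ({1..n} - B) \<in> {1..n}" using JB by auto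
  ultimately show ?thesis
    using nth_least_Diff_singleton[OF i] cover_label_jirr_of[OF B, folded g_def d_def]
    unfolding F_def by auto
qed

lemma insertional_imp_insertion_closed:
  assumes C: "\<forall>n. lattice_congruence n (\<Theta> n)" and I: "insertional \<Theta>"
  shows "insertion_closed \<Theta>"
  unfolding insertion_closed_def
proof (intro allI impI, elim conjE, intro conjI ballI)
  fix n B assume B: "jirr_subset n B" and c: "contracts n (\<Theta> n) (jirr_of n B)"
  note JB = jirr_subsetD[OF B]
  have range: "1 \<le> Min B" "Max ({1..n} - B) \<le> n" using JB by auto
  show "contracts (Suc n) (\<Theta> (Suc n)) (jirr_of (Suc n) (insert i (skip i ` B)))"
    if "i \<in> {Min B + 1..Max ({1..n} - B) + 1}" for i
  proof -
    have "skip i ` B \<union> {t \<in> set [i]. skip i (Min B) < t} \<union> {t \<in> set []. skip i (Max ({1..n} - B)) < t}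
        = insert i (skip i ` B)"
      using that unfolding skip_def by auto
    then show ?thesis
      using insertional_contracts_one_point_label[OF C I B c, of i "[]" "[i]"] that range by simp
  qed
  show "contracts (Suc n) (\<Theta> (Suc n)) (jirr_of (Suc n) (skip i ` B))"
    if "i \<in> {Min B..Max ({1..n} - B)}" for i
  proof -
    have "skip i ` B \<union> {t \<in> set []. skip i (Min B) < t} \<union> {t \<in> set [i]. skip i (Max ({1..n} - B)) < t}
        = skip i ` B"
      using that unfolding skip_def by auto
    then show ?thesis
      using insertional_contracts_one_point_label[OF C I B c, of i "[i]" "[]"] that range by simp
  qed
qed

theorem proposition8p1:
  fixes \<Theta> :: "nat \<Rightarrow> (nat list \<times> nat list) set"
  assumes "\<forall>n. lattice_congruence n (\<Theta> n)"
  shows "insertional \<Theta> \<longleftrightarrow>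
    (\<forall>n g. join_irreducible n g \<and> contracts n (\<Theta> n) g \<longrightarrow>
       (let A = assoc_subset g; m = Min A; M = Max ({1..n} - A) in
         (\<forall>i\<in>{m+1..M+1}. contracts (Suc n) (\<Theta> (Suc n)) (R_ins n i g)) \<and>
         (\<forall>i\<in>{m..M}. contracts (Suc n) (\<Theta> (Suc n)) (L_ins n i g))))"
  unfolding insertion_closed_iff[symmetric]
  using insertion_closed_imp_insertional[OF assms] insertional_imp_insertion_closed[OF assms] by blast

end
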